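(* Let $p_1,\ldots,p_m\in[2,\infty]$, $q\in[1,\infty)$, let $S_1\cup\cdots\cup S_m=[k]$ be a partition, and for $u\in\mathbb R^k$ let $\mathcal N_j(u):=(\sum_{i\in S_j}|u_i|^{p_j})^{1/p_j}$ (with $\mathcal N_j(u):=\max_{i\in S_j}|u_i|$ if $p_j=\infty$) and $\mathcal N(u):=\|(\mathcal N_1(u),\ldots,\mathcal N_m(u))\|_q$. Let $A:\mathbb R^n\to\mathbb R^k$ be linear with $\mathrm{rank}(A)=n$, and for linear $U:\mathbb R^n\to\mathbb R^n$ set $\alpha_j(U):=\mathcal N_j(\|UA^\top e_1\|_2,\ldots,\|UA^\top e_k\|_2)$. Then there is a nonnegative diagonal matrix $W$ such that $U=(A^\top WA)^{-1/2}$ satisfies: (1) $\alpha_1(U)^q+\cdots+\alpha_m(U)^q=n$ if $1\le q\le2$ and $=n^{q/2}$ if $q\ge2$; (2) for all $x\in\mathbb R^n$ and $j\in[m]$, $\mathcal N_j(Ax)\le\alpha_j(U)\|U^{-1}x\|_2\le\alpha_j(U)\mathcal N(Ax)$.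
   Context: $e_1,\ldots,e_k$ is the standard basis of $\mathbb R^k$. *)

theory Defs
  imports "HOL-Analysis.Analysis"
begin

definition blocknorm :: "ereal \<Rightarrow> 'k set \<Rightarrow> real^'k \<Rightarrow> real" where
  "blocknorm pj Sj u =
     (if pj = \<infinity> then Max ((\<lambda>i. \<bar>u $ i\<bar>) ` Sj)
      else (\<Sum>i\<in>Sj. \<bar>u $ i\<bar> powr real_of_ereal pj) powr (1 / real_of_ereal pj))"

definition mixnorm :: "('m::finite \<Rightarrow> ereal) \<Rightarrow> ('m \<Rightarrow> 'k set) \<Rightarrow> real \<Rightarrow> real^'k \<Rightarrow> real" where
  "mixnorm p S q u = (\<Sum>j\<in>UNIV. blocknorm (p j) (S j) u powr q) powr (1 / q)"

definition alpha :: "ereal \<Rightarrow> 'k::finite set \<Rightarrow> real^'n^'k \<Rightarrow> real^'n^'n \<Rightarrow> real" where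
  "alpha pj Sj A U = blocknorm pj Sj (\<chi> i. norm (U *v (transpose A *v axis i 1)))"

definition pos_def_mat :: "real^'n^'n \<Rightarrow> bool" where
  "pos_def_mat U \<longleftrightarrow> (\<forall>x. x \<noteq> 0 \<longrightarrow> x \<bullet> (U *v x) > 0)"

text \<open>U is the inverse square root (A^T W A)^(-1/2) of an invertible matrix M:
  the (unique) symmetric positive definite U with U U M = I.\<close>
definition is_inv_sqrt :: "real^'n^'n \<Rightarrow> real^'n^'n \<Rightarrow> bool" where
  "is_inv_sqrt U M \<longleftrightarrow> invertible M \<and> transpose U = U \<and> pos_def_mat U \<and> U ** U ** M = mat 1"

end

theory Submission
  imports Defs
begin

text \<open>
  Write \<open>r\<^sub>i(V) = |V a\<^sub>i|\<close> for the rows \<open>a\<^sub>i\<close> of \<open>A\<close>, so that \<open>\<alpha>\<^sub>j(V) = N\<^sub>j(r(V))\<close>.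
  Take \<open>V\<close> maximising \<open>det V\<close> among the symmetric positive semidefinite matrices with
  \<open>\<Sum>\<^sub>j \<alpha>\<^sub>j(V)\<^sup>q \<le> c\<close>, where \<open>c = n\<close> if \<open>q \<le> 2\<close> and \<open>c = n powr (q/2)\<close> otherwise: the rank
  condition makes this set compact, and a maximiser saturates the constraint.
  For finite exponents the constraint is differentiable and the Lagrange condition at \<open>V\<close>
  reads \<open>V\<^sup>-\<^sup>2 = A\<^sup>T W A\<close>, with \<open>W\<close> diagonal and proportional to the partial derivatives of the
  constraint with respect to \<open>r\<^sub>i\<^sup>2\<close>. Hence \<open>|V\<^sup>-\<^sup>1 x|\<^sup>2 = \<Sum>\<^sub>i w\<^sub>i (a\<^sub>i \<bullet> x)\<^sup>2\<close>, which Holder's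
  inequality, inside the blocks and then across them, bounds by \<open>N(A x)\<^sup>2\<close>; the choice of \<open>c\<close>
  is exactly what makes the constants match. The other inequality is Cauchy-Schwarz for
  \<open>(A x)\<^sub>i = V a\<^sub>i \<bullet> V\<^sup>-\<^sup>1 x\<close>.
  Infinite exponents are replaced by \<open>k + 2\<close>: the maximisers for these exponents are bounded,
  their determinants are bounded below, and \<open>{A\<^sup>T W A | W \<ge> 0 diagonal}\<close> is closed, so a limit
  point inherits all of them.
\<close>

definition psd_mat :: "real^'n^'n \<Rightarrow> bool" where
  "psd_mat V \<longleftrightarrow> (\<forall>x. 0 \<le> x \<bullet> (V *v x))"

lemma inner_symmetric_matrix:
  fixes V :: "real^'n^'n"
  assumes "transpose V = V"
  shows "x \<bullet> (V *v y) = (V *v x) \<bullet> y"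
proof -
  have "x \<bullet> (V *v y) = (transpose V *v x) \<bullet> y"
    by (simp add: dot_lmul_matrix[symmetric])
  then show ?thesis using assms by simp
qed

lemma matrix_inv_right: "invertible V \<Longrightarrow> V ** matrix_inv V = mat 1"
  and matrix_inv_left: "invertible V \<Longrightarrow> matrix_inv V ** V = mat 1"
  for V :: "real^'n^'n"
  unfolding invertible_def matrix_inv_def by (metis (mono_tags, lifting) someI_ex)+

lemma transpose_matrix_inv:
  fixes V :: "real^'n^'n"
  assumes "transpose V = V" "invertible V"
  shows "transpose (matrix_inv V) = matrix_inv V"
proof -
  have "transpose (matrix_inv V) ** V = mat 1"
    by (metis assms matrix_inv_right matrix_transpose_mul transpose_mat)
  then have "transpose (matrix_inv V) = transpose (matrix_inv V) ** (V ** matrix_inv V)"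
    using matrix_inv_right[OF assms(2)] by simp
  also have "\<dots> = matrix_inv V"
    by (simp add: matrix_mul_assoc \<open>transpose (matrix_inv V) ** V = mat 1\<close>)
  finally show ?thesis .
qed

lemma transpose_add: "transpose (X + Y) = transpose X + transpose (Y::real^'n^'m)"
  and transpose_diff: "transpose (X - Y) = transpose X - transpose Y"
  and transpose_uminus: "transpose (- X) = - transpose X"
  by (simp_all add: transpose_def vec_eq_iff)

lemma matrix_add_rdistrib: "(X + Y) ** Z = X ** Z + Y ** (Z::real^'p^'n)"
  and matrix_diff_rdistrib: "(X - Y) ** Z = X ** Z - Y ** Z"
  and matrix_diff_ldistrib: "Z' ** (X - Y) = Z' ** X - Z' ** Y"
  for X Y :: "real^'n^'m"
  by (simp_all add: matrix_matrix_mult_def vec_eq_iff sum.distrib sum_subtractf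
      distrib_right left_diff_distrib right_diff_distrib)

lemma matrix_uminus_mult: "(- X) ** Y = - (X ** (Y::real^'p^'n))"
  and matrix_mult_uminus: "X ** (- Y) = - (X ** Y)"
  for X :: "real^'n^'m"
  by (simp_all add: vec_eq_iff matrix_matrix_mult_def sum_negf)

lemma trace_scaleR: "trace (k *\<^sub>R X) = k * trace (X::real^'n^'n)"
  by (simp add: trace_def sum_distrib_left)

lemma trace_transpose: "trace (transpose X) = trace (X::real^'n^'n)"
  by (simp add: trace_def transpose_def)

lemma trace_uminus: "trace (- X) = - trace (X::real^'n^'n)"
  by (simp add: trace_def sum_negf)

lemma det_scaleR: "det (s *\<^sub>R V) = s ^ CARD('n) * det (V::real^'n^'n)"
  by (simp add: det_def prod.distrib sum_distrib_left mult_ac)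

lemma pos_def_mat_imp_psd_mat: "pos_def_mat V \<Longrightarrow> psd_mat V"
  unfolding pos_def_mat_def psd_mat_def by (metis inner_zero_left less_le_not_le nle_le)

lemma pos_def_mat_mult_nonzero: "pos_def_mat V \<Longrightarrow> x \<noteq> 0 \<Longrightarrow> V *v x \<noteq> 0"
  unfolding pos_def_mat_def by (metis inner_zero_right less_irrefl)

lemma pos_def_mat_invertible:
  fixes V :: "real^'n^'n"
  assumes "pos_def_mat V"
  shows "invertible V"
proof -
  have "\<forall>x. V *v x = 0 \<longrightarrow> x = 0" using pos_def_mat_mult_nonzero[OF assms] by blast
  then obtain B where "B ** V = mat 1" using matrix_left_invertible_ker by blast
  then show ?thesis unfolding invertible_def using matrix_left_right_inverse by blast
qed

lemma psd_mat_null_vector: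
  fixes V :: "real^'n^'n"
  assumes sym: "transpose V = V" and psd: "psd_mat V" and zero: "x \<bullet> (V *v x) = 0"
  shows "V *v x = 0"
proof (rule ccontr)
  define y where "y = V *v x"
  assume "V *v x \<noteq> 0"
  then have a: "0 < y \<bullet> y" by (simp add: y_def)
  define b where "b = y \<bullet> (V *v y)"
  have b: "0 \<le> b" using psd by (simp add: psd_mat_def b_def)
  have quad: "(x - t *\<^sub>R y) \<bullet> (V *v (x - t *\<^sub>R y)) = t\<^sup>2 * b - 2 * t * (y \<bullet> y)" for t
  proof -
    have "V *v (x - t *\<^sub>R y) = y - t *\<^sub>R (V *v y)"
      by (simp add: y_def matrix_vector_mult_diff_distrib matrix_vector_mult_scaleR)
    moreover have "x \<bullet> (V *v y) = y \<bullet> y" using inner_symmetric_matrix[OF sym] by (simp add: y_def)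
    ultimately show ?thesis
      using zero by (simp add: y_def inner_diff_left inner_diff_right inner_commute b_def
          algebra_simps power2_eq_square)
  qed
  define t where "t = (y \<bullet> y) / (b + 1)"
  have t: "0 < t" using a b by (simp add: t_def)
  have "t * b = (y \<bullet> y) * (b / (b + 1))" by (simp add: t_def)
  also have "\<dots> < (y \<bullet> y) * 2" using a b by (intro mult_strict_left_mono) (auto simp: divide_less_eq)
  finally have "t * b < 2 * (y \<bullet> y)" by simp
  then have "t\<^sup>2 * b - 2 * t * (y \<bullet> y) < 0"
    using t by (simp add: power2_eq_square algebra_simps mult_strict_left_mono)
  with psd quad[of t] show False unfolding psd_mat_def by (metis not_le)
qed

lemma psd_mat_invertible_imp_pos_def:
  fixes V :: "real^'n^'n"
  assumes "transpose V = V" "psd_mat V" "invertible V"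
  shows "pos_def_mat V"
  unfolding pos_def_mat_def
proof (intro allI impI)
  fix x :: "real^'n" assume "x \<noteq> 0"
  then have "V *v x \<noteq> 0"
    using assms(3) by (metis inj_matrix_vector_mult inj_eq matrix_vector_mult_0_right)
  then show "0 < x \<bullet> (V *v x)"
    using psd_mat_null_vector[OF assms(1,2)] assms(2) unfolding psd_mat_def by (metis order_le_less)
qed

lemma trace_mult_self_symmetric:
  fixes X :: "real^'n^'n"
  assumes "transpose X = X"
  shows "trace (X ** X) = (\<Sum>i\<in>UNIV. \<Sum>j\<in>UNIV. (X$i$j)\<^sup>2)"
proof -
  have "X$j$i = X$i$j" for i j using assms by (metis transpose_def vec_lambda_beta)
  then show ?thesis by (simp add: trace_def matrix_matrix_mult_def power2_eq_square)
qed

lemma symmetric_eq_0_if_trace_orthogonal: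
  fixes X :: "real^'n^'n"
  assumes sym: "transpose X = X" and orth: "\<And>H. transpose H = H \<Longrightarrow> trace (X ** H) = 0"
  shows "X = 0"
proof -
  have "(\<Sum>i\<in>UNIV. \<Sum>j\<in>UNIV. (X$i$j)\<^sup>2) = 0"
    using orth[OF sym] trace_mult_self_symmetric[OF sym] by simp
  then have "\<forall>i j. (X$i$j)\<^sup>2 = 0"
    by (simp add: sum_nonneg_eq_0_iff sum_nonneg)
  then show ?thesis by (simp add: vec_eq_iff)
qed

lemma pos_def_mat_lyapunov_eq_0:
  fixes V Y :: "real^'n^'n"
  assumes pd: "pos_def_mat V" and sym: "transpose Y = Y" and eq: "V ** Y + Y ** V = 0"
  shows "Y = 0"
proof -
  have "V ** Y = - (Y ** V)" using eq by (simp add: add_eq_0_iff)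
  then have "(V ** Y) ** Y = - ((Y ** V) ** Y)" by (simp add: matrix_uminus_mult)
  then have VYY: "(V ** Y) ** Y = - (Y ** (V ** Y))" by (simp add: matrix_mul_assoc)
  have "trace (Y ** (V ** Y)) = trace ((V ** Y) ** Y)" by (rule trace_mul_sym)
  also have "\<dots> = - trace (Y ** (V ** Y))" by (simp add: VYY trace_def sum_negf)
  finally have trace0: "trace (Y ** (V ** Y)) = 0" by simp
  have "Y$s$k = Y$k$s" for s k using sym by (metis transpose_def vec_lambda_beta)
  then have diag: "(Y ** (V ** Y))$k$k = (Y$k) \<bullet> (V *v (Y$k))" for k
    by (simp add: matrix_matrix_mult_def matrix_vector_mult_def inner_vec_def sum_distrib_left
        mult.commute mult.left_commute)
  have nonneg: "0 \<le> (Y$k) \<bullet> (V *v (Y$k))" for k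
    using pos_def_mat_imp_psd_mat[OF pd] by (simp add: psd_mat_def)
  have "\<forall>k. (Y$k) \<bullet> (V *v (Y$k)) = 0"
    using trace0 nonneg by (simp add: trace_def diag sum_nonneg_eq_0_iff)
  then have "\<forall>k. Y$k = 0" using pd unfolding pos_def_mat_def by (metis less_irrefl)
  then show ?thesis by (simp add: vec_eq_iff)
qed

lemma closed_symmetric_mats: "closed {V::real^'n^'n. transpose V = V}"
proof -
  have "{V::real^'n^'n. transpose V = V} = {V. \<forall>i j. V$i$j = V$j$i}"
    by (auto simp: vec_eq_iff transpose_def)
  then show ?thesis by (simp, intro closed_Collect_all closed_Collect_eq continuous_intros)
qed

lemma closed_psd_mats: "closed {V::real^'n^'n. psd_mat V}"
  unfolding psd_mat_def matrix_vector_mult_def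
  by (intro closed_Collect_all closed_Collect_le continuous_intros)

lemma pos_def_mat_coercive:
  fixes V :: "real^'n^'n"
  assumes pd: "pos_def_mat V"
  obtains \<mu> where "0 < \<mu>" "\<And>x. \<mu> * (norm x)\<^sup>2 \<le> x \<bullet> (V *v x)"
proof -
  have "sphere (0::real^'n) 1 \<noteq> {}" by (metis ex_in_conv norm_axis_1 mem_sphere_0)
  moreover have "continuous_on (sphere 0 1) (\<lambda>x::real^'n. x \<bullet> (V *v x))"
    by (intro continuous_intros)
  ultimately obtain x0 where x0: "norm x0 = 1"
    and min: "\<And>y. norm y = 1 \<Longrightarrow> x0 \<bullet> (V *v x0) \<le> y \<bullet> (V *v y)"
    using continuous_attains_inf[of "sphere (0::real^'n) 1" "\<lambda>x. x \<bullet> (V *v x)"] by auto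
  have "x0 \<bullet> (V *v x0) * (norm x)\<^sup>2 \<le> x \<bullet> (V *v x)" for x :: "real^'n"
  proof (cases "x = 0")
    case False
    have "x0 \<bullet> (V *v x0) \<le> (x /\<^sub>R norm x) \<bullet> (V *v (x /\<^sub>R norm x))"
      using False by (intro min) simp
    also have "\<dots> = (x \<bullet> (V *v x)) / (norm x)\<^sup>2"
      by (simp add: matrix_vector_mult_scaleR power2_eq_square divide_inverse)
    finally show ?thesis using False by (simp add: field_simps)
  qed simp
  moreover have "0 < x0 \<bullet> (V *v x0)" using pd x0 unfolding pos_def_mat_def by (metis norm_zero zero_neq_one)
  ultimately show ?thesis using that by blast
qed

lemma pos_def_mat_perturb:
  fixes V H :: "real^'n^'n"
  assumes pd: "pos_def_mat V"
  shows "\<exists>d>0. \<forall>h. \<bar>h\<bar> < d \<longrightarrow> psd_mat (V + h *\<^sub>R H)"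
proof -
  obtain \<mu> where \<mu>: "0 < \<mu>" "\<And>x. \<mu> * (norm x)\<^sup>2 \<le> x \<bullet> (V *v x)"
    using pos_def_mat_coercive[OF pd] by blast
  obtain B where B: "B > 0" "\<And>x. norm (H *v x) \<le> B * norm x"
    using linear_bounded_pos[OF matrix_vector_mul_linear] by blast
  have H_upper: "\<bar>x \<bullet> (H *v x)\<bar> \<le> B * (norm x)\<^sup>2" for x :: "real^'n"
  proof -
    have "\<bar>x \<bullet> (H *v x)\<bar> \<le> norm x * norm (H *v x)" by (rule Cauchy_Schwarz_ineq2)
    also have "\<dots> \<le> norm x * (B * norm x)" by (intro mult_left_mono B(2)) simp
    finally show ?thesis by (simp add: power2_eq_square mult_ac)
  qed
  have "psd_mat (V + h *\<^sub>R H)" if h: "\<bar>h\<bar> < \<mu> / B" for h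
    unfolding psd_mat_def
  proof
    fix x :: "real^'n"
    have "\<bar>h * (x \<bullet> (H *v x))\<bar> \<le> \<mu> / B * (B * (norm x)\<^sup>2)"
      unfolding abs_mult using h H_upper[of x] by (intro mult_mono) auto
    then have "\<bar>h * (x \<bullet> (H *v x))\<bar> \<le> \<mu> * (norm x)\<^sup>2" using B by simp
    then show "0 \<le> x \<bullet> ((V + h *\<^sub>R H) *v x)"
      using \<mu>(2)[of x]
      by (simp add: matrix_vector_mult_add_rdistrib scaleR_matrix_vector_assoc[symmetric] inner_add_right)
  qed
  then show ?thesis using \<mu> B by (metis divide_pos_pos)
qed

lemma tendsto_matrix_mult:
  fixes f :: "'a \<Rightarrow> real^'n^'m" and g :: "'a \<Rightarrow> real^'p^'n"
  assumes "(f \<longlongrightarrow> M) F" "(g \<longlongrightarrow> N) F"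
  shows "((\<lambda>k. f k ** g k) \<longlongrightarrow> M ** N) F"
  unfolding matrix_matrix_mult_def using assms by (intro tendsto_intros)

lemma tendsto_det:
  fixes f :: "'a \<Rightarrow> real^'n^'n"
  assumes "(f \<longlongrightarrow> M) F"
  shows "((\<lambda>k. det (f k)) \<longlongrightarrow> det M) F"
  unfolding det_def using assms by (intro tendsto_intros)

lemma matrix_inv_cramer:
  fixes M :: "real^'n^'n"
  assumes "det M \<noteq> 0"
  shows "matrix_inv M = (\<chi> r s. det (\<chi> i j. if j = r then axis s 1 $ i else M$i$j) / det M)"
proof -
  have inv: "invertible M" using assms by (simp add: invertible_det_nz)
  have "matrix_inv M $ r $ s = det (\<chi> i j. if j = r then axis s 1 $ i else M$i$j) / det M" for r s
  proof -
    have "M *v (matrix_inv M *v axis s 1) = axis s 1"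
      by (simp add: matrix_vector_mul_assoc matrix_inv_right[OF inv])
    then have "matrix_inv M *v axis s 1 = (\<chi> k. det (\<chi> i j. if j = k then axis s 1 $ i else M$i$j) / det M)"
      using cramer[OF assms] by blast
    then show ?thesis by (simp add: matrix_vector_mult_basis column_def vec_eq_iff)
  qed
  then show ?thesis by (simp add: vec_eq_iff)
qed

lemma tendsto_matrix_inv:
  fixes f :: "'a \<Rightarrow> real^'n^'n"
  assumes lim: "(f \<longlongrightarrow> M) F" and det: "det M \<noteq> 0"
  shows "((\<lambda>k. matrix_inv (f k)) \<longlongrightarrow> matrix_inv M) F"
proof -
  let ?cramer = "\<lambda>M::real^'n^'n. \<chi> r s. det (\<chi> i j. if j = r then axis s 1 $ i else M$i$j) / det M"
  have "((\<lambda>k. ?cramer (f k)) \<longlongrightarrow> ?cramer M) F"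
  proof -
    have "((\<lambda>k. f k $ i $ j) \<longlongrightarrow> M $ i $ j) F" for i j by (intro tendsto_vec_nth lim)
    then show ?thesis using det lim by (intro tendsto_intros tendsto_det) auto
  qed
  moreover have "eventually (\<lambda>k. ?cramer (f k) = matrix_inv (f k)) F"
    using tendsto_imp_eventually_ne[OF tendsto_det[OF lim] det]
    by eventually_elim (simp add: matrix_inv_cramer)
  ultimately show ?thesis using matrix_inv_cramer[OF det] by (simp add: tendsto_cong)
qed

lemma permutes_nonid_moves_other:
  assumes p: "p permutes UNIV" and nonid: "p \<noteq> id"
  shows "\<exists>y. y \<noteq> x \<and> p y \<noteq> y"
proof -
  obtain y where y: "p y \<noteq> y" using nonid by (metis eq_id_iff)
  show ?thesis
  proof (cases "y = x")
    case True
    then have "p (p x) \<noteq> p x" using y permutes_inj[OF p] by (metis injD)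
    then show ?thesis using y True by metis
  qed (use y in blast)
qed

text \<open>A permutation other than the identity moves at least two points, so its term in the
  Leibniz expansion of \<open>det (I + t K)\<close> is \<open>O(t\<^sup>2)\<close>.\<close>
lemma DERIV_det_id_plus:
  fixes K :: "real^'n^'n"
  shows "((\<lambda>t. det (mat 1 + t *\<^sub>R K)) has_real_derivative trace K) (at 0)"
proof -
  let ?P = "{p. p permutes (UNIV::'n set)}"
  define e where "e = (\<lambda>p (i::'n) (t::real). (if i = p i then 1 else 0) + t * K$i$(p i))"
  have det_eq: "det (mat 1 + t *\<^sub>R K) = (\<Sum>p\<in>?P. of_int (sign p) * (\<Prod>i\<in>UNIV. e p i t))" for t
    by (simp add: det_def e_def mat_def)
  define D where "D = (\<lambda>p. of_int (sign p) * (\<Sum>x\<in>UNIV. K$x$(p x) * (\<Prod>y\<in>UNIV-{x}. e p y 0)))"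
  have term_deriv: "((\<lambda>t. of_int (sign p) * (\<Prod>i\<in>UNIV. e p i t)) has_real_derivative D p) (at 0)" for p
  proof -
    have "((\<lambda>t. e p i t) has_real_derivative K$i$(p i)) (at 0)" for i
      unfolding e_def by (auto intro!: derivative_eq_intros)
    then have "((\<lambda>t. \<Prod>i\<in>UNIV. e p i t) has_real_derivative
        (\<Sum>x\<in>UNIV. K$x$(p x) * (\<Prod>y\<in>UNIV-{x}. e p y 0))) (at 0)"
      by (rule has_field_derivative_prod)
    then show ?thesis unfolding D_def by (auto intro!: derivative_eq_intros)
  qed
  have D_nonid: "D p = 0" if p: "p \<in> ?P" "p \<noteq> id" for p
  proof -
    have prod0: "(\<Prod>y\<in>UNIV-{x}. e p y 0) = 0" for x
    proof -
      obtain y where "y \<noteq> x" "p y \<noteq> y" using permutes_nonid_moves_other[of p x] p by auto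
      then show ?thesis by (intro prod_zero) (auto simp: e_def intro!: bexI[of _ y])
    qed
    then show ?thesis by (simp add: D_def prod0)
  qed
  have "sum D ?P = D id + sum D (?P - {id})"
    by (simp add: sum.remove permutes_id)
  also have "\<dots> = trace K"
    using D_nonid by (simp add: D_def e_def trace_def sign_id)
  finally have "sum D ?P = trace K" .
  moreover have "((\<lambda>t. \<Sum>p\<in>?P. of_int (sign p) * (\<Prod>i\<in>UNIV. e p i t)) has_real_derivative sum D ?P) (at 0)"
    by (rule DERIV_sum) (rule term_deriv)
  ultimately show ?thesis unfolding det_eq by simp
qed

lemma DERIV_det_plus:
  fixes V H :: "real^'n^'n"
  assumes inv: "invertible V"
  shows "((\<lambda>t. det (V + t *\<^sub>R H)) has_real_derivative det V * trace (matrix_inv V ** H)) (at 0)"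
proof -
  have "V ** (mat 1 + t *\<^sub>R (matrix_inv V ** H)) = V + t *\<^sub>R H" for t
    using matrix_inv_right[OF inv]
    by (simp add: matrix_add_ldistrib matrix_scalar_ac matrix_mul_assoc scalar_matrix_assoc[symmetric])
  then have "det (V + t *\<^sub>R H) = det V * det (mat 1 + t *\<^sub>R (matrix_inv V ** H))" for t
    by (metis det_mul)
  then show ?thesis by (auto intro!: derivative_eq_intros DERIV_det_id_plus)
qed

section \<open>Maximising the determinant under a differentiable constraint\<close>

lemma det_max_first_order:
  fixes V B H :: "real^'n^'n" and G :: "real^'n^'n \<Rightarrow> real"
  assumes sym: "transpose V = V" and pd: "pos_def_mat V" and det: "0 < det V"
    and der: "((\<lambda>t. G (V + t *\<^sub>R H)) has_real_derivative trace (B ** V ** H)) (at 0)"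
    and max: "\<And>V'. transpose V' = V' \<Longrightarrow> psd_mat V' \<Longrightarrow> G V' \<le> G V \<Longrightarrow> det V' \<le> det V"
    and H: "transpose H = H" and descent: "trace (B ** V ** H) < 0"
  shows "trace (matrix_inv V ** H) \<le> 0"
proof (rule ccontr)
  assume "\<not> trace (matrix_inv V ** H) \<le> 0"
  then have "0 < det V * trace (matrix_inv V ** H)" using det by simp
  from DERIV_pos_inc_right[OF DERIV_det_plus[OF pos_def_mat_invertible[OF pd]] this]
  obtain d1 where d1: "0 < d1" "\<And>h. 0 < h \<Longrightarrow> h < d1 \<Longrightarrow> det V < det (V + h *\<^sub>R H)"
    by auto
  from DERIV_neg_dec_right[OF der descent]
  obtain d2 where d2: "0 < d2" "\<And>h. 0 < h \<Longrightarrow> h < d2 \<Longrightarrow> G (V + h *\<^sub>R H) < G V"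
    by auto
  obtain d3 where d3: "0 < d3" "\<And>h. \<bar>h\<bar> < d3 \<Longrightarrow> psd_mat (V + h *\<^sub>R H)"
    using pos_def_mat_perturb[OF pd] by blast
  define h where "h = min d1 (min d2 d3) / 2"
  have h: "0 < h" "h < d1" "h < d2" "h < d3" using d1 d2 d3 by (auto simp: h_def)
  have "transpose (V + h *\<^sub>R H) = V + h *\<^sub>R H"
    using sym H by (simp add: transpose_add transpose_scalar)
  with h d2 d3 have "det (V + h *\<^sub>R H) \<le> det V"
    by (intro max) (auto intro: less_imp_le)
  with h d1 show False by force
qed

text \<open>The trace condition forces \<open>V\<^sup>-\<^sup>1 = (B V + V B) / 2\<close>, so \<open>Y = V\<^sup>-\<^sup>2 - B\<close> solves
  the Lyapunov equation \<open>V Y + Y V = 0\<close>.\<close>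
lemma inverse_square_eq_if_trace_eq:
  fixes V B :: "real^'n^'n"
  assumes sym: "transpose V = V" and pd: "pos_def_mat V" and B_sym: "transpose B = B"
    and trace_eq: "\<And>H. transpose H = H \<Longrightarrow> trace (matrix_inv V ** H) = trace (B ** V ** H)"
  shows "matrix_inv V ** matrix_inv V = B"
proof -
  define R where "R = matrix_inv V"
  have inv: "invertible V" by (rule pos_def_mat_invertible[OF pd])
  have VR: "V ** R = mat 1" and RV: "R ** V = mat 1"
    using matrix_inv_right[OF inv] matrix_inv_left[OF inv] by (simp_all add: R_def)
  have R_sym: "transpose R = R" unfolding R_def by (rule transpose_matrix_inv[OF sym inv])
  define X where "X = R - (1/2) *\<^sub>R (B ** V + V ** B)"
  have X_sym: "transpose X = X"
    by (simp add: X_def transpose_diff transpose_add transpose_scalar matrix_transpose_mul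
        R_sym B_sym sym add.commute)
  have "X = 0"
  proof (rule symmetric_eq_0_if_trace_orthogonal[OF X_sym])
    fix H :: "real^'n^'n" assume H: "transpose H = H"
    have "trace (V ** B ** H) = trace (transpose (V ** B ** H))" by (simp add: trace_transpose)
    also have "\<dots> = trace (H ** (B ** V))" by (simp add: matrix_transpose_mul H B_sym sym)
    also have "\<dots> = trace (B ** V ** H)" by (rule trace_mul_sym)
    finally have "trace (V ** B ** H) = trace (B ** V ** H)" .
    then show "trace (X ** H) = 0"
      using trace_eq[OF H]
      by (simp add: X_def R_def matrix_diff_rdistrib matrix_add_rdistrib scalar_matrix_assoc[symmetric]
          trace_sub trace_add trace_scaleR)
  qed
  define Y where "Y = R ** R - B"
  have Y_sym: "transpose Y = Y"
    by (simp add: Y_def transpose_diff matrix_transpose_mul R_sym B_sym)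
  from \<open>X = 0\<close> have R: "R = (1/2) *\<^sub>R (B ** V + V ** B)" by (simp add: X_def)
  have "R + R = B ** V + V ** B" by (subst (1 2) R) (simp flip: scaleR_left_distrib)
  moreover have "V ** Y = R - V ** B" by (simp add: Y_def matrix_diff_ldistrib matrix_mul_assoc VR)
  moreover have "Y ** V = R - B ** V" by (simp add: Y_def matrix_diff_rdistrib RV flip: matrix_mul_assoc)
  ultimately have "V ** Y + Y ** V = 0" by (simp add: add_diff_add add.commute)
  then show ?thesis using pos_def_mat_lyapunov_eq_0[OF pd Y_sym] by (simp add: Y_def R_def)
qed

text \<open>Perturbing \<open>V\<close> along \<open>H - s V\<close>, with \<open>s\<close> just large enough to decrease \<open>G\<close>,
  gives \<open>trace (V\<^sup>-\<^sup>1 H) \<le> n / \<tau> * trace (B V H) + \<epsilon>\<close>; applying this also to \<open>-H\<close>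
  gives equality.\<close>
lemma det_max_inverse_square:
  fixes V B :: "real^'n^'n" and G :: "real^'n^'n \<Rightarrow> real"
  assumes sym: "transpose V = V" and pd: "pos_def_mat V" and det: "0 < det V"
    and B_sym: "transpose B = B" and pos: "0 < trace (B ** V ** V)"
    and der: "\<And>H. ((\<lambda>t. G (V + t *\<^sub>R H)) has_real_derivative trace (B ** V ** H)) (at 0)"
    and max: "\<And>V'. transpose V' = V' \<Longrightarrow> psd_mat V' \<Longrightarrow> G V' \<le> G V \<Longrightarrow> det V' \<le> det V"
  shows "matrix_inv V ** matrix_inv V = (real CARD('n) / trace (B ** V ** V)) *\<^sub>R B"
proof (rule inverse_square_eq_if_trace_eq[OF sym pd])
  define n where "n = real CARD('n)"
  define \<tau> where "\<tau> = trace (B ** V ** V)"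
  have n: "0 < n" by (simp add: n_def)
  have RV: "matrix_inv V ** V = mat 1" by (rule matrix_inv_left[OF pos_def_mat_invertible[OF pd]])
  have upper: "trace (matrix_inv V ** H) \<le> n / \<tau> * trace (B ** V ** H)" if H: "transpose H = H" for H
  proof (rule field_le_epsilon)
    fix e :: real assume e: "0 < e"
    define s where "s = (trace (B ** V ** H) + e * \<tau> / n) / \<tau>"
    have "trace (B ** V ** (H - s *\<^sub>R V)) = trace (B ** V ** H) - s * \<tau>"
      by (simp add: \<tau>_def matrix_diff_ldistrib matrix_scalar_ac scalar_matrix_assoc[symmetric]
          trace_sub trace_scaleR)
    also have "\<dots> < 0" using pos n e by (simp add: s_def \<tau>_def)
    finally have "trace (matrix_inv V ** (H - s *\<^sub>R V)) \<le> 0"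
      using H sym by (intro det_max_first_order[OF sym pd det der max])
        (simp_all add: transpose_diff transpose_scalar)
    then have "trace (matrix_inv V ** H) \<le> s * n"
      by (simp add: matrix_diff_ldistrib matrix_scalar_ac scalar_matrix_assoc[symmetric] RV
          trace_sub trace_scaleR trace_I n_def)
    also have "\<dots> = n / \<tau> * trace (B ** V ** H) + e" using pos n by (simp add: s_def \<tau>_def field_simps)
    finally show "trace (matrix_inv V ** H) \<le> n / \<tau> * trace (B ** V ** H) + e" .
  qed
  fix H :: "real^'n^'n" assume H: "transpose H = H"
  have "- trace (matrix_inv V ** H) \<le> - (n / \<tau> * trace (B ** V ** H))"
    using upper[of "- H"] H
    by (simp add: transpose_uminus matrix_mult_uminus trace_uminus)
  with upper[OF H] have "trace (matrix_inv V ** H) = n / \<tau> * trace (B ** V ** H)" by simp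
  then show "trace (matrix_inv V ** H) = trace ((n / \<tau>) *\<^sub>R B ** V ** H)"
    by (simp add: scalar_matrix_assoc[symmetric] trace_scaleR)
qed (simp add: B_sym transpose_scalar)

section \<open>Weighted Gram matrices\<close>

definition diag_mat :: "('k \<Rightarrow> real) \<Rightarrow> real^'k^'k" where
  "diag_mat w = (\<chi> i j. if i = j then w i else 0)"

definition weighted_gram :: "real^'n^'k \<Rightarrow> ('k::finite \<Rightarrow> real) \<Rightarrow> real^'n^'n" where
  "weighted_gram A w = transpose A ** diag_mat w ** A"

definition gram_cone :: "real^'n^'k \<Rightarrow> (real^'n^'n) set" where
  "gram_cone A = {weighted_gram A w | w. \<forall>i. 0 \<le> w i}"

lemma weighted_gram_entry: "weighted_gram A w $ r $ s = (\<Sum>i\<in>UNIV. w i * A$i$r * A$i$s)"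
proof -
  have "(transpose A ** diag_mat w) $ r $ i = w i * A$i$r" for i
    by (simp add: matrix_matrix_mult_def diag_mat_def transpose_def if_distrib cong: if_cong)
  then show ?thesis by (simp add: weighted_gram_def matrix_matrix_mult_def)
qed

lemma weighted_gram_scaleR: "c *\<^sub>R weighted_gram A w = weighted_gram A (\<lambda>i. c * w i)"
  by (simp add: vec_eq_iff weighted_gram_entry sum_distrib_left mult.assoc)

lemma transpose_weighted_gram: "transpose (weighted_gram A w) = weighted_gram A w"
  by (simp add: vec_eq_iff transpose_def weighted_gram_entry mult.commute mult.left_commute)

lemma inner_weighted_gram: "x \<bullet> (weighted_gram A w *v x) = (\<Sum>i\<in>UNIV. w i * (A$i \<bullet> x)\<^sup>2)"
proof -
  have "x \<bullet> (weighted_gram A w *v x) =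
      (\<Sum>r\<in>UNIV. \<Sum>s\<in>UNIV. \<Sum>i\<in>UNIV. w i * (A$i$r * x$r) * (A$i$s * x$s))"
    by (simp add: inner_vec_def matrix_vector_mult_def weighted_gram_entry sum_distrib_left
        sum_distrib_right mult.commute mult.left_commute)
  also have "\<dots> = (\<Sum>i\<in>UNIV. \<Sum>r\<in>UNIV. \<Sum>s\<in>UNIV. w i * (A$i$r * x$r) * (A$i$s * x$s))"
    by (subst sum.swap, subst (2) sum.swap) simp
  also have "\<dots> = (\<Sum>i\<in>UNIV. w i * (A$i \<bullet> x)\<^sup>2)"
    by (simp add: inner_vec_def power2_eq_square sum_distrib_left sum_distrib_right
        mult.commute mult.left_commute)
  finally show ?thesis .
qed

lemma trace_weighted_gram_mult:
  "trace (weighted_gram A w ** M) = (\<Sum>i\<in>UNIV. w i * (A$i \<bullet> (M *v A$i)))"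
proof -
  have "trace (weighted_gram A w ** M) = (\<Sum>r\<in>UNIV. \<Sum>s\<in>UNIV. \<Sum>i\<in>UNIV. w i * (A$i$r * M$s$r * A$i$s))"
    by (simp add: trace_def matrix_matrix_mult_def weighted_gram_entry sum_distrib_left
        sum_distrib_right mult.commute mult.left_commute)
  also have "\<dots> = (\<Sum>i\<in>UNIV. \<Sum>s\<in>UNIV. \<Sum>r\<in>UNIV. w i * (A$i$r * M$s$r * A$i$s))"
    by (subst sum.swap, subst (2) sum.swap, subst (3) sum.swap) simp
  also have "\<dots> = (\<Sum>i\<in>UNIV. w i * (A$i \<bullet> (M *v A$i)))"
    by (simp add: inner_vec_def matrix_vector_mult_def sum_distrib_left sum_distrib_right
        mult.commute mult.left_commute)
  finally show ?thesis .
qed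

lemma trace_weighted_gram_symmetric_mult:
  assumes "transpose V = V"
  shows "trace (weighted_gram A w ** V ** H) = (\<Sum>i\<in>UNIV. w i * ((V *v A$i) \<bullet> (H *v A$i)))"
  using trace_weighted_gram_mult[of A w "V ** H"]
  by (simp add: matrix_mul_assoc matrix_vector_mul_assoc[symmetric] inner_symmetric_matrix[OF assms])

lemma weighted_gram_cong:
  assumes "\<And>i. A$i \<noteq> 0 \<Longrightarrow> w i = w' i"
  shows "weighted_gram A w = weighted_gram A w'"
proof -
  have "w i * A$i$r * A$i$s = w' i * A$i$r * A$i$s" for i r s
    using assms[of i] by (cases "A$i = 0") auto
  then show ?thesis unfolding vec_eq_iff weighted_gram_entry by (intro allI sum.cong refl)
qed

lemma tendsto_weighted_gram:
  fixes w :: "'a \<Rightarrow> real^'k"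
  assumes "(w \<longlongrightarrow> v) F"
  shows "((\<lambda>k. weighted_gram A (\<lambda>i. w k $ i)) \<longlongrightarrow> weighted_gram A (\<lambda>i. v $ i)) F"
proof -
  have "weighted_gram A (\<lambda>i. u $ i) = (\<chi> r s. \<Sum>i\<in>UNIV. u $ i * A$i$r * A$i$s)" for u :: "real^'k"
    by (simp add: vec_eq_iff weighted_gram_entry)
  then show ?thesis using assms by (simp, intro tendsto_intros)
qed

text \<open>Weights on zero rows of \<open>A\<close> do not matter; setting them to \<open>0\<close> bounds the
  weights by the trace.\<close>
lemma gram_cone_bounded_weights:
  fixes A :: "real^'n^'k::finite"
  assumes "M \<in> gram_cone A"
  obtains v :: "real^'k" where "\<And>i. 0 \<le> v $ i" "M = weighted_gram A (\<lambda>i. v $ i)"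
    "norm v \<le> (\<Sum>i\<in>UNIV. if A$i = 0 then 0 else trace M / (A$i \<bullet> A$i))"
proof -
  obtain w where w: "\<And>i. 0 \<le> w i" "M = weighted_gram A w"
    using assms by (auto simp: gram_cone_def)
  define v where "v = (\<chi> i. if A$i = 0 then 0 else w i)"
  have v_nonneg: "0 \<le> v $ i" for i by (simp add: v_def w(1))
  have M_v: "M = weighted_gram A (\<lambda>i. v $ i)"
    unfolding w(2) by (rule weighted_gram_cong) (simp add: v_def)
  have "\<bar>v $ i\<bar> \<le> (if A$i = 0 then 0 else trace M / (A$i \<bullet> A$i))" for i
  proof (cases "A$i = 0")
    case False
    have "v $ i * (A$i \<bullet> A$i) \<le> (\<Sum>i\<in>UNIV. v $ i * (A$i \<bullet> A$i))"
      by (rule member_le_sum) (auto intro!: mult_nonneg_nonneg v_nonneg)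
    also have "\<dots> = trace M"
      using trace_weighted_gram_mult[of A "\<lambda>i. v $ i" "mat 1"] by (simp add: M_v)
    finally show ?thesis using False v_nonneg[of i] by (simp add: field_simps)
  qed (simp add: v_def)
  then have "norm v \<le> (\<Sum>i\<in>UNIV. if A$i = 0 then 0 else trace M / (A$i \<bullet> A$i))"
    by (rule order_trans[OF norm_le_l1_cart sum_mono])
  with v_nonneg M_v that show ?thesis by blast
qed

lemma closed_gram_cone:
  fixes A :: "real^'n^'k::finite"
  shows "closed (gram_cone A)"
  unfolding closed_sequential_limits
proof (intro allI impI, elim conjE)
  fix Ms :: "nat \<Rightarrow> real^'n^'n" and M
  assume cone: "\<forall>k. Ms k \<in> gram_cone A" and lim: "Ms \<longlonglongrightarrow> M"
  obtain B where B: "\<And>k. trace (Ms k) \<le> B"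
  proof -
    have "(\<lambda>k. trace (Ms k)) \<longlonglongrightarrow> trace M" unfolding trace_def by (intro tendsto_intros lim)
    then show ?thesis using that convergent_imp_bounded[of "\<lambda>k. trace (Ms k)"]
      by (auto simp: bounded_iff convergent_def abs_le_iff) (meson abs_le_D1)
  qed
  let ?bound = "\<lambda>t. \<Sum>i\<in>UNIV. if A$i = 0 then 0 else t / (A$i \<bullet> A$i)"
  have "\<forall>k. \<exists>v::real^'k. (\<forall>i. 0 \<le> v $ i) \<and> Ms k = weighted_gram A (\<lambda>i. v $ i)
      \<and> norm v \<le> ?bound (trace (Ms k))"
  proof
    fix k
    show "\<exists>v::real^'k. (\<forall>i. 0 \<le> v $ i) \<and> Ms k = weighted_gram A (\<lambda>i. v $ i)
      \<and> norm v \<le> ?bound (trace (Ms k))"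
      by (rule gram_cone_bounded_weights[OF cone[rule_format, of k]]) blast
  qed
  from choice[OF this] obtain v where v: "\<forall>k. (\<forall>i. 0 \<le> v k $ i) \<and> Ms k = weighted_gram A (\<lambda>i. v k $ i)
      \<and> norm (v k) \<le> ?bound (trace (Ms k))" ..
  then have v_nonneg: "\<And>k i. 0 \<le> v k $ i" and Ms_v: "\<And>k. Ms k = weighted_gram A (\<lambda>i. v k $ i)"
    and v_bound: "\<And>k. norm (v k) \<le> ?bound (trace (Ms k))"
    by blast+
  have "norm (v k) \<le> ?bound B" for k
    using B[of k] by (intro order_trans[OF v_bound sum_mono]) (simp add: divide_right_mono)
  then have "bounded (range v)" by (auto simp: bounded_iff)
  then obtain \<rho> wl where \<rho>: "strict_mono \<rho>" and "(v \<circ> \<rho>) \<longlonglongrightarrow> wl"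
    using bounded_imp_convergent_subsequence by blast
  then have lim_v: "(\<lambda>k. v (\<rho> k)) \<longlonglongrightarrow> wl" by (simp add: o_def)
  have "(\<lambda>k. Ms (\<rho> k)) \<longlonglongrightarrow> weighted_gram A (\<lambda>i. wl $ i)"
    unfolding Ms_v by (rule tendsto_weighted_gram[OF lim_v])
  moreover have "(\<lambda>k. Ms (\<rho> k)) \<longlonglongrightarrow> M" using LIMSEQ_subseq_LIMSEQ[OF lim \<rho>] by (simp add: o_def)
  ultimately have "M = weighted_gram A (\<lambda>i. wl $ i)" using LIMSEQ_unique by blast
  moreover have "0 \<le> wl $ i" for i
    using v_nonneg by (intro LIMSEQ_le_const[OF tendsto_vec_nth[OF lim_v]]) auto
  ultimately show "M \<in> gram_cone A" by (auto simp: gram_cone_def)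
qed

section \<open>Power sums\<close>

lemma sum_powr_holder:
  fixes x y :: "'i \<Rightarrow> real"
  assumes \<theta>: "0 < \<theta>" "\<theta> \<le> 1" and fin: "finite I"
    and nonneg: "\<And>i. i \<in> I \<Longrightarrow> 0 \<le> x i" "\<And>i. i \<in> I \<Longrightarrow> 0 \<le> y i"
  shows "(\<Sum>i\<in>I. x i powr (1 - \<theta>) * y i powr \<theta>) \<le> (\<Sum>i\<in>I. x i) powr (1 - \<theta>) * (\<Sum>i\<in>I. y i) powr \<theta>"
proof -
  define X where "X = (\<Sum>i\<in>I. x i)"
  define Y where "Y = (\<Sum>i\<in>I. y i)"
  have XY: "0 \<le> X" "0 \<le> Y" using nonneg by (auto simp: X_def Y_def intro: sum_nonneg)
  show ?thesis
  proof (cases "X = 0 \<or> Y = 0")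
    case True
    then have "\<forall>i\<in>I. x i = 0 \<or> y i = 0"
      using nonneg fin by (auto simp: X_def Y_def sum_nonneg_eq_0_iff)
    then have "(\<Sum>i\<in>I. x i powr (1 - \<theta>) * y i powr \<theta>) = 0" by (intro sum.neutral) auto
    then show ?thesis by (metis mult_nonneg_nonneg powr_ge_zero)
  next
    case False
    then have pos: "0 < X" "0 < Y" using XY by auto
    define C where "C = X powr (1 - \<theta>) * Y powr \<theta>"
    have young_term: "x i powr (1 - \<theta>) * y i powr \<theta> \<le> C * (1 - \<theta>) / X * x i + C * \<theta> / Y * y i"
      if i: "i \<in> I" for i
    proof -
      have "x i powr (1 - \<theta>) * y i powr \<theta> = C * ((x i / X) powr (1 - \<theta>) * (y i / Y) powr \<theta>)"
        using pos nonneg[OF i] by (simp add: C_def powr_divide)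
      also have "(x i / X) powr (1 - \<theta>) * (y i / Y) powr \<theta> \<le> (1 - \<theta>) * (x i / X) + \<theta> * (y i / Y)"
        using Youngs_inequality_0[of "1 - \<theta>" \<theta> "x i / X" "y i / Y"] pos nonneg[OF i] \<theta>
        by (cases "x i = 0 \<or> y i = 0") auto
      then have "C * ((x i / X) powr (1 - \<theta>) * (y i / Y) powr \<theta>) \<le> C * ((1 - \<theta>) * (x i / X) + \<theta> * (y i / Y))"
        by (intro mult_left_mono) (simp_all add: C_def)
      also have "\<dots> = C * (1 - \<theta>) / X * x i + C * \<theta> / Y * y i"
        using pos by (simp add: field_simps)
      finally show ?thesis .
    qed
    have "(\<Sum>i\<in>I. x i powr (1 - \<theta>) * y i powr \<theta>) \<le> (\<Sum>i\<in>I. C * (1 - \<theta>) / X * x i + C * \<theta> / Y * y i)"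
      by (intro sum_mono young_term)
    also have "\<dots> = C * (1 - \<theta>) / X * (\<Sum>i\<in>I. x i) + C * \<theta> / Y * (\<Sum>i\<in>I. y i)"
      by (simp add: sum.distrib sum_distrib_left)
    also have "\<dots> = C" using pos by (simp add: X_def[symmetric] Y_def[symmetric] field_simps)
    finally show ?thesis by (simp add: C_def X_def Y_def)
  qed
qed

lemma powr_mult_square_le:
  fixes s N r q P :: real
  assumes q: "q \<le> 2" and P: "0 < P" and s: "0 \<le> s" and N: "0 \<le> N" and r: "0 \<le> r"
    and N_le: "N \<le> s powr (1 / P) * r"
  shows "s powr ((q - 2) / P) * N\<^sup>2 \<le> N powr q * r powr (2 - q)"
proof (cases "s = 0 \<or> N = 0")
  case False
  define a where "a = s powr (1 / P)"
  have pos: "0 < s" "0 < N" "0 < a" using False s N by (auto simp: a_def)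
  have "s powr ((q - 2) / P) = inverse (a powr (2 - q))"
    by (simp add: a_def powr_powr minus_divide_left flip: powr_minus)
  moreover have "N\<^sup>2 = N powr q * N powr (2 - q)"
    using pos by (simp flip: powr_add)
  ultimately have "s powr ((q - 2) / P) * N\<^sup>2 = N powr q * (N powr (2 - q) / a powr (2 - q))"
    by (simp add: divide_inverse mult_ac)
  also have "\<dots> = N powr q * (N / a) powr (2 - q)" using pos by (simp add: powr_divide)
  also have "\<dots> \<le> N powr q * r powr (2 - q)"
    using pos N_le q by (intro mult_left_mono powr_mono2) (auto simp: a_def field_simps)
  finally show ?thesis .
qed (use N r in auto)

lemma powsum_root_bound_small_exponent:
  fixes \<sigma> N P :: "'j \<Rightarrow> real"
  assumes J: "finite J" and q: "1 \<le> q" "q \<le> 2" and P: "\<And>j. 0 < P j"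
    and \<sigma>: "\<And>j. 0 \<le> \<sigma> j" and N: "\<And>j. 0 \<le> N j" and r: "0 \<le> r"
    and N_le: "\<And>j. N j \<le> \<sigma> j powr (1 / P j) * r"
    and r_le: "r\<^sup>2 \<le> (\<Sum>j\<in>J. \<sigma> j powr ((q - 2) / P j) * (N j)\<^sup>2)"
  shows "r \<le> (\<Sum>j\<in>J. N j powr q) powr (1 / q)"
proof (cases "r = 0")
  case False
  with r have r: "0 < r" by simp
  define T where "T = (\<Sum>j\<in>J. N j powr q)"
  have "r powr q * r powr (2 - q) = r\<^sup>2" using r by (simp add: powr_add[symmetric] powr_numeral)
  also have "\<dots> \<le> (\<Sum>j\<in>J. N j powr q * r powr (2 - q))"
    using r_le powr_mult_square_le[OF q(2) P \<sigma> N less_imp_le[OF r] N_le] by (meson order_trans sum_mono)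
  also have "\<dots> = T * r powr (2 - q)" by (simp add: T_def sum_distrib_right)
  finally have "r powr q \<le> T" using r by simp
  then have "(r powr q) powr (1 / q) \<le> T powr (1 / q)" using r q by (intro powr_mono2) auto
  then show ?thesis using r q by (simp add: T_def powr_powr)
qed (simp add: r)

lemma powsum_root_bound_large_exponent:
  fixes \<sigma> N P :: "'j \<Rightarrow> real"
  assumes J: "finite J" and q: "2 \<le> q" and P: "\<And>j. 0 < P j" and n: "0 < n"
    and \<sigma>: "\<And>j. 0 \<le> \<sigma> j" and N: "\<And>j. 0 \<le> N j" and r: "0 \<le> r"
    and \<sigma>_sum: "(\<Sum>j\<in>J. \<sigma> j powr (q / P j)) = n powr (q / 2)"
    and r_le: "r\<^sup>2 \<le> n / n powr (q / 2) * (\<Sum>j\<in>J. \<sigma> j powr ((q - 2) / P j) * (N j)\<^sup>2)"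
  shows "r \<le> (\<Sum>j\<in>J. N j powr q) powr (1 / q)"
proof -
  define \<theta> where "\<theta> = 2 / q"
  define T where "T = (\<Sum>j\<in>J. N j powr q)"
  have \<theta>: "0 < \<theta>" "\<theta> \<le> 1" using q by (auto simp: \<theta>_def)
  have "\<sigma> j powr ((q - 2) / P j) * (N j)\<^sup>2 = (\<sigma> j powr (q / P j)) powr (1 - \<theta>) * (N j powr q) powr \<theta>" for j
  proof -
    have e1: "q / P j * (1 - \<theta>) = (q - 2) / P j" using q P[of j] by (simp add: \<theta>_def field_simps)
    have e2: "q * \<theta> = 2" using q by (simp add: \<theta>_def)
    show ?thesis unfolding powr_powr e1 e2 using N[of j] by simp
  qed
  then have "(\<Sum>j\<in>J. \<sigma> j powr ((q - 2) / P j) * (N j)\<^sup>2) \<le> (n powr (q / 2)) powr (1 - \<theta>) * T powr \<theta>"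
    using sum_powr_holder[OF \<theta> J, of "\<lambda>j. \<sigma> j powr (q / P j)" "\<lambda>j. N j powr q"]
    by (simp add: \<sigma>_sum T_def)
  then have "r\<^sup>2 \<le> n / n powr (q / 2) * ((n powr (q / 2)) powr (1 - \<theta>) * T powr \<theta>)"
    using r_le n by (smt (verit) divide_nonneg_nonneg mult_left_mono powr_ge_zero)
  also have "\<dots> = T powr (2 / q)"
  proof -
    have e: "q / 2 * (1 - \<theta>) = q / 2 - 1" using q by (simp add: \<theta>_def field_simps)
    have "(n powr (q / 2)) powr (1 - \<theta>) = n powr (q / 2 - 1)" unfolding powr_powr e ..
    also have "\<dots> = n powr (q / 2) / n" using n by (simp only: powr_diff) simp
    finally show ?thesis using n by (simp add: \<theta>_def)
  qed
  finally have "r\<^sup>2 \<le> (T powr (1 / q))\<^sup>2"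
    by (simp add: powr_powr flip: powr_numeral)
  then show ?thesis unfolding T_def by (rule power2_le_imp_le) simp
qed

section \<open>Block norms\<close>

lemma blocknorm_ereal:
  "blocknorm (ereal P) S u = (\<Sum>i\<in>S. \<bar>u$i\<bar> powr P) powr (1 / P)"
  by (simp add: blocknorm_def)

lemma blocknorm_infinity: "blocknorm \<infinity> S u = Max ((\<lambda>i. \<bar>u$i\<bar>) ` S)"
  by (simp add: blocknorm_def)

lemma blocknorm_nonneg:
  assumes "finite S" "S \<noteq> {}"
  shows "0 \<le> blocknorm p S u"
proof -
  obtain i where "i \<in> S" using assms by blast
  then have "\<bar>u$i\<bar> \<le> Max ((\<lambda>i. \<bar>u$i\<bar>) ` S)" using assms by (intro Max_ge) auto
  then have "0 \<le> Max ((\<lambda>i. \<bar>u$i\<bar>) ` S)" by (rule order_trans[OF abs_ge_zero])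
  then show ?thesis by (simp add: blocknorm_def)
qed

lemma abs_le_blocknorm:
  assumes "0 < p" "finite S" "i \<in> S"
  shows "\<bar>u$i\<bar> \<le> blocknorm p S u"
proof (cases p)
  case (real P)
  have "\<bar>u$i\<bar> powr P \<le> (\<Sum>i\<in>S. \<bar>u$i\<bar> powr P)"
    using assms by (intro member_le_sum) auto
  then have "(\<bar>u$i\<bar> powr P) powr (1/P) \<le> (\<Sum>i\<in>S. \<bar>u$i\<bar> powr P) powr (1/P)"
    using assms real by (intro powr_mono2) auto
  then show ?thesis using assms real by (simp add: blocknorm_ereal powr_powr)
qed (use assms in \<open>auto simp: blocknorm_infinity\<close>)

lemma blocknorm_le_mult:
  assumes p: "0 < p" and S: "finite S" "S \<noteq> {}" and r: "0 \<le> r"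
    and le: "\<And>i. i \<in> S \<Longrightarrow> \<bar>u$i\<bar> \<le> r * \<bar>v$i\<bar>"
  shows "blocknorm p S u \<le> r * blocknorm p S v"
proof (cases p)
  case (real P)
  then have P: "0 < P" using p by simp
  have "\<bar>u$i\<bar> powr P \<le> r powr P * \<bar>v$i\<bar> powr P" if "i \<in> S" for i
  proof -
    have "\<bar>u$i\<bar> powr P \<le> (r * \<bar>v$i\<bar>) powr P" using le[OF that] P by (intro powr_mono2) auto
    then show ?thesis using r by (simp add: powr_mult)
  qed
  then have "(\<Sum>i\<in>S. \<bar>u$i\<bar> powr P) \<le> r powr P * (\<Sum>i\<in>S. \<bar>v$i\<bar> powr P)"
    by (simp add: sum_distrib_left sum_mono)
  then have "blocknorm p S u \<le> (r powr P * (\<Sum>i\<in>S. \<bar>v$i\<bar> powr P)) powr (1/P)"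
    using real P by (simp only: blocknorm_ereal) (intro powr_mono2, auto intro: sum_nonneg)
  also have "\<dots> = r * blocknorm p S v"
    using real P r by (simp add: blocknorm_ereal powr_mult powr_powr sum_nonneg)
  finally show ?thesis .
next
  case PInf
  have "\<bar>u$i\<bar> \<le> r * Max ((\<lambda>i. \<bar>v$i\<bar>) ` S)" if "i \<in> S" for i
  proof -
    have "\<bar>v$i\<bar> \<le> Max ((\<lambda>i. \<bar>v$i\<bar>) ` S)" using S that by (intro Max_ge) auto
    then show ?thesis using le[OF that] r by (meson mult_left_mono order_trans)
  qed
  then show ?thesis using PInf S by (simp add: blocknorm_infinity)
qed (use p in simp)

lemma blocknorm_ereal_le_card:
  assumes P: "1 \<le> P" and S: "finite S" and M: "0 \<le> M" "\<And>i. i \<in> S \<Longrightarrow> \<bar>u$i\<bar> \<le> M"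
  shows "blocknorm (ereal P) S u \<le> real (card S) * M"
proof (cases "S = {}")
  case False
  then have card: "1 \<le> real (card S)" using S by (simp add: Suc_le_eq card_gt_0_iff)
  have "(\<Sum>i\<in>S. \<bar>u$i\<bar> powr P) \<le> (\<Sum>i\<in>S. M powr P)"
    using M P by (intro sum_mono powr_mono2) auto
  then have "blocknorm (ereal P) S u \<le> (real (card S) * M powr P) powr (1/P)"
    using P by (simp only: blocknorm_ereal) (intro powr_mono2, auto intro: sum_nonneg)
  also have "\<dots> = real (card S) powr (1/P) * M"
    using P M by (simp add: powr_mult powr_powr)
  also have "\<dots> \<le> real (card S) powr 1 * M"
    using card P M by (intro mult_right_mono powr_mono) auto
  finally show ?thesis using card by simp
qed (simp add: blocknorm_ereal)

lemma blocknorm_ereal_le_infinity: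
  assumes P: "0 < P" and S: "finite S" "S \<noteq> {}"
  shows "blocknorm (ereal P) S u \<le> real (card S) powr (1/P) * blocknorm \<infinity> S u"
proof -
  define M where "M = blocknorm \<infinity> S u"
  have le: "\<bar>u$i\<bar> \<le> M" if "i \<in> S" for i
    using abs_le_blocknorm[of \<infinity> S i u] S that by (simp add: M_def)
  have M: "0 \<le> M" unfolding M_def by (rule blocknorm_nonneg[OF S])
  have "(\<Sum>i\<in>S. \<bar>u$i\<bar> powr P) \<le> (\<Sum>i\<in>S. M powr P)"
    using le P by (intro sum_mono powr_mono2) auto
  then have "blocknorm (ereal P) S u \<le> (real (card S) * M powr P) powr (1/P)"
    using P by (simp only: blocknorm_ereal) (intro powr_mono2, auto intro: sum_nonneg)
  also have "\<dots> = real (card S) powr (1/P) * M"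
    using P M by (simp add: powr_mult powr_powr)
  finally show ?thesis by (simp add: M_def)
qed

lemma continuous_on_blocknorm_ereal:
  assumes "0 < P"
  shows "continuous_on X (blocknorm (ereal P) S)"
  unfolding blocknorm_ereal[abs_def]
  using assms by (intro continuous_on_powr' continuous_intros) (auto intro: sum_nonneg)

lemma tendsto_Max_image:
  fixes g :: "'a \<Rightarrow> 'i \<Rightarrow> real"
  assumes "finite S" "S \<noteq> {}" "\<And>i. i \<in> S \<Longrightarrow> ((\<lambda>k. g k i) \<longlongrightarrow> l i) F"
  shows "((\<lambda>k. Max (g k ` S)) \<longlongrightarrow> Max (l ` S)) F"
  using assms
proof (induction S rule: finite_ne_induct)
  case (insert x S)
  then have "((\<lambda>k. max (g k x) (Max (g k ` S))) \<longlongrightarrow> max (l x) (Max (l ` S))) F"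
    by (intro tendsto_max) auto
  then show ?case using insert by simp
qed simp

lemma tendsto_blocknorm_infinity:
  fixes f :: "'a \<Rightarrow> real^'k"
  assumes S: "finite S" "S \<noteq> {}" and f: "(f \<longlongrightarrow> v) F" and P: "filterlim P at_top F"
  shows "((\<lambda>k. blocknorm (ereal (P k)) S (f k)) \<longlongrightarrow> blocknorm \<infinity> S v) F"
proof (rule tendsto_sandwich)
  have P_pos: "eventually (\<lambda>k. 0 < P k) F" using P by (simp add: filterlim_at_top_dense)
  have Max: "((\<lambda>k. blocknorm \<infinity> S (f k)) \<longlongrightarrow> blocknorm \<infinity> S v) F"
    using S unfolding blocknorm_infinity by (intro tendsto_Max_image tendsto_intros f)
  then show "((\<lambda>k. blocknorm \<infinity> S (f k)) \<longlongrightarrow> blocknorm \<infinity> S v) F" .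
  have "((\<lambda>k. real (card S) powr inverse (P k)) \<longlongrightarrow> real (card S) powr 0) F"
    using S by (intro tendsto_intros tendsto_inverse_0_at_top[OF P]) (auto simp: card_gt_0_iff)
  then have "((\<lambda>k. real (card S) powr (1 / P k) * blocknorm \<infinity> S (f k)) \<longlongrightarrow> 1 * blocknorm \<infinity> S v) F"
    using S by (intro tendsto_mult Max) (simp add: divide_inverse card_gt_0_iff)
  then show "((\<lambda>k. real (card S) powr (1 / P k) * blocknorm \<infinity> S (f k)) \<longlongrightarrow> blocknorm \<infinity> S v) F"
    by simp
  show "eventually (\<lambda>k. blocknorm \<infinity> S (f k) \<le> blocknorm (ereal (P k)) S (f k)) F"
    using P_pos
  proof eventually_elim
    case (elim k)
    then have "\<bar>f k $ i\<bar> \<le> blocknorm (ereal (P k)) S (f k)" if "i \<in> S" for i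
      using S that by (intro abs_le_blocknorm) auto
    then show ?case using S by (simp add: blocknorm_infinity)
  qed
  show "eventually (\<lambda>k. blocknorm (ereal (P k)) S (f k) \<le> real (card S) powr (1 / P k) * blocknorm \<infinity> S (f k)) F"
    using P_pos by eventually_elim (rule blocknorm_ereal_le_infinity[OF _ S])
qed

definition block_of :: "('m \<Rightarrow> 'k set) \<Rightarrow> 'k \<Rightarrow> 'm" where
  "block_of S i = (SOME j. i \<in> S j)"

lemma block_of_mem: "(\<Union>j. S j) = UNIV \<Longrightarrow> i \<in> S (block_of S i)"
  unfolding block_of_def by (rule someI_ex) blast

lemma sum_over_blocks:
  fixes S :: "'m::finite \<Rightarrow> 'k::finite set"
  assumes cover: "(\<Union>j. S j) = UNIV" and disj: "disjoint_family S"
  shows "(\<Sum>j\<in>UNIV. \<Sum>i\<in>S j. f j i) = (\<Sum>i\<in>UNIV. f (block_of S i) i)"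
proof -
  have block_of: "block_of S i = j" if "i \<in> S j" for i j
    using block_of_mem[OF cover, of i] disj that unfolding disjoint_family_on_def by blast
  have "(\<Sum>i\<in>UNIV. f (block_of S i) i) = (\<Sum>j\<in>UNIV. \<Sum>i\<in>S j. f (block_of S i) i)"
    unfolding cover[symmetric]
    by (rule sum.UNION_disjoint) (use disj in \<open>auto simp: disjoint_family_on_def\<close>)
  also have "\<dots> = (\<Sum>j\<in>UNIV. \<Sum>i\<in>S j. f j i)"
    using block_of by (intro sum.cong refl) auto
  finally show ?thesis by simp
qed

section \<open>The constraint and its gradient\<close>

definition row_norms :: "real^'n^'k \<Rightarrow> real^'n^'n \<Rightarrow> real^'k" where
  "row_norms A V = (\<chi> i. norm (V *v A$i))"

definition block_powsum :: "('m::finite \<Rightarrow> ereal) \<Rightarrow> ('m \<Rightarrow> 'k set) \<Rightarrow> real \<Rightarrow> real^'k \<Rightarrow> real" where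
  "block_powsum p S q u = (\<Sum>j\<in>UNIV. blocknorm (p j) (S j) u powr q)"

lemma alpha_eq_blocknorm_row_norms: "alpha p Sj A U = blocknorm p Sj (row_norms A U)"
proof -
  have "transpose A *v axis i 1 = A $ i" for i
    by (simp add: vec_eq_iff matrix_vector_mult_def transpose_def axis_def if_distrib
        del: transpose_matrix_vector cong: if_cong)
  then show ?thesis by (simp add: alpha_def row_norms_def)
qed

lemma mixnorm_eq_block_powsum: "mixnorm p S q u = block_powsum p S q u powr (1 / q)"
  by (simp add: mixnorm_def block_powsum_def)

lemma continuous_on_row_norms: "continuous_on X (row_norms A)"
proof -
  have "row_norms A = (\<lambda>V. \<chi> i. norm (\<chi> r. \<Sum>s\<in>UNIV. V$r$s * A$i$s))"
    by (simp add: fun_eq_iff row_norms_def matrix_vector_mult_def)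
  then show ?thesis by (simp, intro continuous_intros)
qed

lemma blocknorm_mult_le_row_norms:
  fixes V :: "real^'n^'n" and A :: "real^'n^'k::finite"
  assumes sym: "transpose V = V" and inv: "invertible V" and p: "0 < p" and S: "S \<noteq> {}"
  shows "blocknorm p S (A *v x) \<le> blocknorm p S (row_norms A V) * norm (matrix_inv V *v x)"
proof -
  have "\<bar>(A *v x) $ i\<bar> \<le> norm (matrix_inv V *v x) * \<bar>row_norms A V $ i\<bar>" for i
  proof -
    have x: "V *v (matrix_inv V *v x) = x"
      by (simp add: matrix_vector_mul_assoc matrix_inv_right[OF inv])
    have "(A *v x) $ i = A$i \<bullet> x" by (simp add: matrix_vector_mult_def inner_vec_def)
    also have "\<dots> = A$i \<bullet> (V *v (matrix_inv V *v x))" by (simp only: x)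
    also have "\<dots> = (V *v A$i) \<bullet> (matrix_inv V *v x)" by (rule inner_symmetric_matrix[OF sym])
    finally show ?thesis
      using Cauchy_Schwarz_ineq2[of "V *v A$i" "matrix_inv V *v x"] by (simp add: row_norms_def mult.commute)
  qed
  then show ?thesis
    using blocknorm_le_mult[OF p _ S] by (simp add: mult.commute)
qed

lemma row_norm_le_block_powsum:
  fixes S :: "'m::finite \<Rightarrow> 'k::finite set"
  assumes cover: "(\<Union>j. S j) = UNIV" and p: "\<And>j. 0 < p j" and q: "0 < q"
  shows "norm (V *v A$i) \<le> block_powsum p S q (row_norms A V) powr (1/q)"
proof -
  let ?j = "block_of S i" and ?N = "\<lambda>j. blocknorm (p j) (S j) (row_norms A V)"
  have "\<bar>row_norms A V $ i\<bar> \<le> ?N ?j"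
    by (rule abs_le_blocknorm[OF p]) (simp_all add: block_of_mem[OF cover])
  then have le: "norm (V *v A$i) \<le> ?N ?j" by (simp add: row_norms_def)
  also have "\<dots> = (?N ?j powr q) powr (1/q)"
    using q order_trans[OF norm_ge_zero le] by (simp add: powr_powr)
  also have "\<dots> \<le> block_powsum p S q (row_norms A V) powr (1/q)"
    unfolding block_powsum_def using q by (intro powr_mono2 member_le_sum) (auto intro: sum_nonneg)
  finally show ?thesis .
qed

definition row_sqnorm :: "real^'n^'k \<Rightarrow> real^'n^'n \<Rightarrow> 'k \<Rightarrow> real" where
  "row_sqnorm A V i = (V *v A$i) \<bullet> (V *v A$i)"

definition block_pow :: "real \<Rightarrow> 'k set \<Rightarrow> real^'n^'k \<Rightarrow> real^'n^'n \<Rightarrow> real" where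
  "block_pow P Sj A V = (\<Sum>i\<in>Sj. row_sqnorm A V i powr (P / 2))"

text \<open>\<open>2/q\<close> times the derivative of \<open>block_pow P Sj A V powr (q / P)\<close> with respect to
  \<open>row_sqnorm A V i\<close>; it vanishes when \<open>A$i = 0\<close> because \<open>0 powr x = 0\<close>.\<close>
definition block_weight :: "real \<Rightarrow> real \<Rightarrow> 'k set \<Rightarrow> real^'n^'k \<Rightarrow> real^'n^'n \<Rightarrow> 'k \<Rightarrow> real" where
  "block_weight q P Sj A V i = block_pow P Sj A V powr (q / P - 1) * row_sqnorm A V i powr (P / 2 - 1)"

lemma row_sqnorm_nonneg: "0 \<le> row_sqnorm A V i"
  by (simp add: row_sqnorm_def)

lemma block_pow_nonneg: "0 \<le> block_pow P Sj A V"
  by (simp add: block_pow_def sum_nonneg)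

lemma block_weight_nonneg: "0 \<le> block_weight q P Sj A V i"
  by (simp add: block_weight_def)

lemma blocknorm_row_norms: "blocknorm (ereal P) Sj (row_norms A V) = block_pow P Sj A V powr (1 / P)"
proof -
  have norm_powr: "\<bar>norm x\<bar> powr P = (x \<bullet> x) powr (P / 2)" for x :: "real^'n"
    by (simp add: norm_eq_sqrt_inner powr_half_sqrt[symmetric] powr_powr)
  show ?thesis
    unfolding blocknorm_ereal block_pow_def row_sqnorm_def row_norms_def
    by (simp only: vec_lambda_beta norm_powr)
qed

lemma block_powsum_row_norms:
  assumes "\<And>j. P j \<noteq> 0"
  shows "block_powsum (\<lambda>j. ereal (P j)) S q (row_norms A V) = (\<Sum>j\<in>UNIV. block_pow (P j) (S j) A V powr (q / P j))"
  using assms by (simp add: block_powsum_def blocknorm_row_norms powr_powr)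

lemma row_sqnorm_pos: "pos_def_mat V \<Longrightarrow> A$i \<noteq> 0 \<Longrightarrow> 0 < row_sqnorm A V i"
  using pos_def_mat_mult_nonzero by (simp add: row_sqnorm_def)

lemma DERIV_row_sqnorm_powr:
  assumes pd: "pos_def_mat V" and P: "0 < P"
  shows "((\<lambda>t. row_sqnorm A (V + t *\<^sub>R H) i powr (P / 2)) has_real_derivative
     P * row_sqnorm A V i powr (P / 2 - 1) * ((V *v A$i) \<bullet> (H *v A$i))) (at 0)"
proof (cases "A$i = 0")
  case True
  then show ?thesis by (simp add: row_sqnorm_def)
next
  case False
  have "(V + t *\<^sub>R H) *v A$i = V *v A$i + t *\<^sub>R (H *v A$i)" for t
    by (simp add: matrix_vector_mult_add_rdistrib scaleR_matrix_vector_assoc)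
  then have path: "row_sqnorm A (V + t *\<^sub>R H) i =
      row_sqnorm A V i + 2 * t * ((V *v A$i) \<bullet> (H *v A$i)) + t\<^sup>2 * ((H *v A$i) \<bullet> (H *v A$i))" for t
    by (simp add: row_sqnorm_def inner_add_left inner_add_right inner_commute power2_eq_square algebra_simps)
  have "((\<lambda>t. row_sqnorm A (V + t *\<^sub>R H) i) has_real_derivative 2 * ((V *v A$i) \<bullet> (H *v A$i))) (at 0)"
    unfolding path by (auto intro!: derivative_eq_intros)
  from DERIV_fun_powr[OF this, of "P / 2"] show ?thesis
    using row_sqnorm_pos[OF pd False] by (simp add: mult_ac)
qed

lemma DERIV_block_pow_powr:
  assumes pd: "pos_def_mat V" and P: "0 < P"
  shows "((\<lambda>t. block_pow P Sj A (V + t *\<^sub>R H) powr (q / P)) has_real_derivative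
     q * (\<Sum>i\<in>Sj. block_weight q P Sj A V i * ((V *v A$i) \<bullet> (H *v A$i)))) (at 0)"
proof (cases "\<forall>i\<in>Sj. A$i = 0")
  case True
  then show ?thesis by (simp add: block_pow_def block_weight_def row_sqnorm_def)
next
  case False
  then obtain i0 where i0: "i0 \<in> Sj" "A$i0 \<noteq> 0" by blast
  have "0 < row_sqnorm A V i0 powr (P / 2)" using row_sqnorm_pos[OF pd i0(2)] by simp
  also have "\<dots> \<le> block_pow P Sj A V" unfolding block_pow_def
    by (rule member_le_sum) (use i0 in auto)
  finally have pos: "0 < block_pow P Sj A V" .
  have "((\<lambda>t. block_pow P Sj A (V + t *\<^sub>R H)) has_real_derivative
      (\<Sum>i\<in>Sj. P * row_sqnorm A V i powr (P / 2 - 1) * ((V *v A$i) \<bullet> (H *v A$i)))) (at 0)"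
    unfolding block_pow_def by (intro DERIV_sum DERIV_row_sqnorm_powr[OF pd P])
  from DERIV_fun_powr[OF this, of "q / P"] show ?thesis
    using pos P by (simp add: block_weight_def sum_distrib_left mult_ac)
qed

lemma block_weight_euler:
  assumes pd: "pos_def_mat V"
  shows "(\<Sum>i\<in>Sj. block_weight q P Sj A V i * row_sqnorm A V i) = block_pow P Sj A V powr (q / P)"
proof (cases "block_pow P Sj A V = 0")
  case True
  then show ?thesis by (simp add: block_weight_def)
next
  case False
  then have pos: "0 < block_pow P Sj A V" using block_pow_nonneg[of P Sj A V] by simp
  have "row_sqnorm A V i powr (P / 2 - 1) * row_sqnorm A V i = row_sqnorm A V i powr (P / 2)" for i
    using row_sqnorm_nonneg[of A V i] by (cases "row_sqnorm A V i = 0") (simp_all add: powr_diff)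
  then have "(\<Sum>i\<in>Sj. block_weight q P Sj A V i * row_sqnorm A V i) =
      block_pow P Sj A V powr (q / P - 1) * block_pow P Sj A V"
    by (simp add: block_weight_def block_pow_def sum_distrib_left mult.assoc)
  also have "\<dots> = block_pow P Sj A V powr (q / P)"
    using pos by (simp add: powr_diff)
  finally show ?thesis .
qed

lemma block_weight_holder:
  assumes P: "2 \<le> P" and fin: "finite Sj"
  shows "(\<Sum>i\<in>Sj. block_weight q P Sj A V i * (u$i)\<^sup>2)
           \<le> block_pow P Sj A V powr ((q - 2) / P) * blocknorm (ereal P) Sj u ^ 2"
proof -
  define \<sigma> where "\<sigma> = block_pow P Sj A V"
  define \<theta> where "\<theta> = 2 / P"
  have \<theta>: "0 < \<theta>" "\<theta> \<le> 1" using P by (auto simp: \<theta>_def)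
  define x where "x i = row_sqnorm A V i powr (P / 2)" for i
  define y where "y i = \<bar>u$i\<bar> powr P" for i
  have exponent: "P / 2 * (1 - \<theta>) = P / 2 - 1" using P by (simp add: \<theta>_def field_simps)
  have "x i powr (1 - \<theta>) = row_sqnorm A V i powr (P / 2 - 1)" for i
    unfolding x_def powr_powr exponent ..
  moreover have "y i powr \<theta> = (u$i)\<^sup>2" for i
    using P by (simp add: y_def powr_powr \<theta>_def)
  ultimately have "(\<Sum>i\<in>Sj. block_weight q P Sj A V i * (u$i)\<^sup>2)
      = \<sigma> powr (q / P - 1) * (\<Sum>i\<in>Sj. x i powr (1 - \<theta>) * y i powr \<theta>)"
    by (simp add: block_weight_def \<sigma>_def sum_distrib_left mult.assoc)
  also have "\<dots> \<le> \<sigma> powr (q / P - 1) * ((\<Sum>i\<in>Sj. x i) powr (1 - \<theta>) * (\<Sum>i\<in>Sj. y i) powr \<theta>)"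
    by (intro mult_left_mono sum_powr_holder \<theta> fin) (auto simp: x_def y_def)
  also have "(\<Sum>i\<in>Sj. x i) = \<sigma>" by (simp add: x_def \<sigma>_def block_pow_def)
  also have "(\<Sum>i\<in>Sj. y i) powr \<theta> = blocknorm (ereal P) Sj u ^ 2"
    using P by (simp add: y_def \<theta>_def blocknorm_ereal powr_powr sum_nonneg flip: powr_numeral)
  also have "\<sigma> powr (q / P - 1) * (\<sigma> powr (1 - \<theta>) * blocknorm (ereal P) Sj u ^ 2)
      = \<sigma> powr ((q - 2) / P) * blocknorm (ereal P) Sj u ^ 2"
    using P by (simp add: mult.assoc[symmetric] powr_add[symmetric] \<theta>_def diff_divide_distrib)
  finally show ?thesis by (simp add: \<sigma>_def)
qed

definition lagrange_weights :: "('m \<Rightarrow> real) \<Rightarrow> ('m \<Rightarrow> 'k set) \<Rightarrow> real \<Rightarrow> real^'n^'k \<Rightarrow> real^'n^'n \<Rightarrow> 'k \<Rightarrow> real" where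
  "lagrange_weights P S q A V i = block_weight q (P (block_of S i)) (S (block_of S i)) A V i"

lemma DERIV_block_powsum_row_norms:
  fixes S :: "'m::finite \<Rightarrow> 'k::finite set"
  assumes sym: "transpose V = V" and pd: "pos_def_mat V" and P: "\<And>j. 0 < P j"
    and cover: "(\<Union>j. S j) = UNIV" and disj: "disjoint_family S"
  shows "((\<lambda>t. block_powsum (\<lambda>j. ereal (P j)) S q (row_norms A (V + t *\<^sub>R H))) has_real_derivative
           trace (weighted_gram A (\<lambda>i. q * lagrange_weights P S q A V i) ** V ** H)) (at 0)"
proof -
  have P0: "P j \<noteq> 0" for j using P[of j] by simp
  have "((\<lambda>t. \<Sum>j\<in>UNIV. block_pow (P j) (S j) A (V + t *\<^sub>R H) powr (q / P j)) has_real_derivative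
     (\<Sum>j\<in>UNIV. q * (\<Sum>i\<in>S j. block_weight q (P j) (S j) A V i * ((V *v A$i) \<bullet> (H *v A$i))))) (at 0)"
    by (intro DERIV_sum DERIV_block_pow_powr[OF pd P])
  moreover have "(\<Sum>j\<in>UNIV. q * (\<Sum>i\<in>S j. block_weight q (P j) (S j) A V i * ((V *v A$i) \<bullet> (H *v A$i))))
      = trace (weighted_gram A (\<lambda>i. q * lagrange_weights P S q A V i) ** V ** H)"
    by (simp add: trace_weighted_gram_symmetric_mult[OF sym] sum_over_blocks[OF cover disj]
        lagrange_weights_def sum_distrib_left mult.assoc flip: sum_distrib_left)
  ultimately show ?thesis by (simp add: block_powsum_row_norms[OF P0])
qed

lemma trace_lagrange_gram_euler:
  fixes S :: "'m::finite \<Rightarrow> 'k::finite set"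
  assumes sym: "transpose V = V" and pd: "pos_def_mat V" and P: "\<And>j. 0 < P j"
    and cover: "(\<Union>j. S j) = UNIV" and disj: "disjoint_family S"
  shows "trace (weighted_gram A (\<lambda>i. q * lagrange_weights P S q A V i) ** V ** V)
           = q * block_powsum (\<lambda>j. ereal (P j)) S q (row_norms A V)"
proof -
  have P0: "P j \<noteq> 0" for j using P[of j] by simp
  have "trace (weighted_gram A (\<lambda>i. q * lagrange_weights P S q A V i) ** V ** V)
      = q * (\<Sum>j\<in>UNIV. \<Sum>i\<in>S j. block_weight q (P j) (S j) A V i * row_sqnorm A V i)"
    by (simp add: trace_weighted_gram_symmetric_mult[OF sym] sum_over_blocks[OF cover disj]
        lagrange_weights_def row_sqnorm_def sum_distrib_left mult.assoc)
  also have "\<dots> = q * block_powsum (\<lambda>j. ereal (P j)) S q (row_norms A V)"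
    by (simp add: block_weight_euler[OF pd] block_powsum_row_norms[OF P0])
  finally show ?thesis .
qed

section \<open>Finite exponents\<close>

definition feasible_mats :: "('m::finite \<Rightarrow> ereal) \<Rightarrow> ('m \<Rightarrow> 'k set) \<Rightarrow> real \<Rightarrow> real^'n^'k \<Rightarrow> real \<Rightarrow> (real^'n^'n) set" where
  "feasible_mats p S q A c = {V. transpose V = V \<and> psd_mat V \<and> block_powsum p S q (row_norms A V) \<le> c}"

lemma norm_le_if_row_norms_le:
  fixes A :: "real^'n^'k"
  assumes rank: "rank A = CARD('n)"
  obtains C where "0 \<le> C" "\<And>(V::real^'n^'n) T. (\<And>i. norm (V *v A$i) \<le> T) \<Longrightarrow> norm V \<le> C * T"
proof -
  have "rank (transpose A) = CARD('n)" using rank by (simp add: rank_transpose)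
  then have "surj ((*v) (transpose A))" by (simp only: full_rank_surjective)
  then obtain L where L: "transpose A ** L = mat 1"
    using matrix_right_invertible_surjective by blast
  define C where "C = real CARD('n) * (\<Sum>s\<in>UNIV. \<Sum>i\<in>UNIV. \<bar>L$i$s\<bar>)"
  have "norm V \<le> C * T" if T: "\<And>i. norm (V *v A$i) \<le> T" for V :: "real^'n^'n" and T
  proof -
    have entry: "\<bar>V$r$s\<bar> \<le> (\<Sum>i\<in>UNIV. \<bar>L$i$s\<bar>) * T" for r s
    proof -
      have "V$r$s = ((V ** transpose A) ** L)$r$s"
        by (simp add: L flip: matrix_mul_assoc)
      also have "\<dots> = (\<Sum>i\<in>UNIV. (V *v A$i)$r * L$i$s)"
        by (simp add: matrix_matrix_mult_def matrix_vector_mult_def transpose_def)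
      finally have "\<bar>V$r$s\<bar> \<le> (\<Sum>i\<in>UNIV. \<bar>(V *v A$i)$r\<bar> * \<bar>L$i$s\<bar>)"
        by (simp add: order_trans[OF sum_abs] abs_mult)
      also have "\<dots> \<le> (\<Sum>i\<in>UNIV. T * \<bar>L$i$s\<bar>)"
        by (intro sum_mono mult_right_mono order_trans[OF component_le_norm_cart T]) auto
      finally show ?thesis by (simp add: sum_distrib_left mult_ac)
    qed
    have "norm V \<le> (\<Sum>r\<in>UNIV. norm (V$r))"
      unfolding norm_vec_def by (rule L2_set_le_sum) simp
    also have "\<dots> \<le> (\<Sum>r\<in>UNIV. \<Sum>s\<in>UNIV. \<bar>V$r$s\<bar>)"
      by (intro sum_mono norm_le_l1_cart)
    also have "\<dots> \<le> (\<Sum>r\<in>(UNIV::'n set). \<Sum>s\<in>UNIV. (\<Sum>i\<in>UNIV. \<bar>L$i$s\<bar>) * T)"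
      by (intro sum_mono entry)
    also have "\<dots> = C * T" by (simp add: C_def sum_distrib_right)
    finally show ?thesis .
  qed
  moreover have "0 \<le> C" by (simp add: C_def sum_nonneg)
  ultimately show ?thesis using that by blast
qed

lemma bounded_feasible_mats:
  fixes S :: "'m::finite \<Rightarrow> 'k::finite set" and A :: "real^'n^'k"
  assumes cover: "(\<Union>j. S j) = UNIV" and q: "0 < q" and rank: "rank A = CARD('n)"
  obtains C where "\<And>p V. (\<And>j. 0 < p j) \<Longrightarrow> V \<in> feasible_mats p S q A c \<Longrightarrow> norm V \<le> C"
proof -
  obtain C where C: "\<And>(V::real^'n^'n) T. (\<And>i. norm (V *v A$i) \<le> T) \<Longrightarrow> norm V \<le> C * T"
    using norm_le_if_row_norms_le[OF rank] by blast
  have "norm V \<le> C * c powr (1/q)" if p: "\<And>j. 0 < p j" and V: "V \<in> feasible_mats p S q A c" for p V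
  proof (rule C)
    fix i
    have "norm (V *v A$i) \<le> block_powsum p S q (row_norms A V) powr (1/q)"
      by (rule row_norm_le_block_powsum[OF cover p q])
    also have "\<dots> \<le> c powr (1/q)"
      using V q by (intro powr_mono2) (auto simp: feasible_mats_def block_powsum_def sum_nonneg)
    finally show "norm (V *v A$i) \<le> c powr (1/q)" .
  qed
  then show ?thesis using that by blast
qed

lemma closed_feasible_mats:
  assumes P: "\<And>j. 0 < P j" and q: "0 < q"
  shows "closed (feasible_mats (\<lambda>j. ereal (P j)) S q A c)"
proof -
  have "continuous_on UNIV (\<lambda>V. block_powsum (\<lambda>j. ereal (P j)) S q (row_norms A V))"
    unfolding block_powsum_def using q
    by (intro continuous_intros continuous_on_powr'
        continuous_on_compose2[OF continuous_on_blocknorm_ereal[OF P] continuous_on_row_norms])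
      (auto intro: blocknorm_nonneg simp: blocknorm_ereal)
  then show ?thesis
    unfolding feasible_mats_def Collect_conj_eq
    by (intro closed_Int closed_symmetric_mats closed_psd_mats closed_Collect_le continuous_on_const) auto
qed

lemma scaled_identity_feasible:
  fixes S :: "'m::finite \<Rightarrow> 'k::finite set" and A :: "real^'n^'k"
  assumes c: "0 < c" and q: "0 < q"
  obtains \<epsilon> where "0 < \<epsilon>" "\<And>P. (\<And>j. 1 \<le> P j) \<Longrightarrow> \<epsilon> *\<^sub>R mat 1 \<in> feasible_mats (\<lambda>j. ereal (P j)) S q A c"
proof -
  define L where "L = real CARD('k) * (\<Sum>i\<in>UNIV. norm (A$i)) + 1"
  define r where "r = (c / real CARD('m)) powr (1/q)"
  define \<epsilon> where "\<epsilon> = r / L"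
  have L: "0 < L" by (simp add: L_def add_nonneg_pos sum_nonneg)
  have r: "0 < r" using c by (simp add: r_def)
  have \<epsilon>: "0 < \<epsilon>" using L r by (simp add: \<epsilon>_def)
  have "\<epsilon> *\<^sub>R mat 1 \<in> feasible_mats (\<lambda>j. ereal (P j)) S q A c" if P: "\<And>j. 1 \<le> P j" for P
  proof -
    have block: "blocknorm (ereal (P j)) (S j) (row_norms A (\<epsilon> *\<^sub>R mat 1)) \<le> r" for j
    proof -
      have "blocknorm (ereal (P j)) (S j) (row_norms A (\<epsilon> *\<^sub>R mat 1))
          \<le> real (card (S j)) * (\<epsilon> * (\<Sum>i\<in>UNIV. norm (A$i)))"
        using P \<epsilon>
        by (intro blocknorm_ereal_le_card)
          (auto simp: row_norms_def scaleR_matrix_vector_assoc[symmetric] sum_nonneg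
            intro!: mult_left_mono member_le_sum)
      also have "\<dots> \<le> \<epsilon> * L"
      proof -
        have "real (card (S j)) \<le> real CARD('k)" by (simp add: card_mono)
        then have "real (card (S j)) * (\<Sum>i\<in>UNIV. norm (A$i)) \<le> L"
          unfolding L_def by (smt (verit) mult_right_mono sum_nonneg norm_ge_zero)
        then show ?thesis using \<epsilon> by (simp add: mult.left_commute)
      qed
      finally show ?thesis using L by (simp add: \<epsilon>_def)
    qed
    have "block_powsum (\<lambda>j. ereal (P j)) S q (row_norms A (\<epsilon> *\<^sub>R mat 1)) \<le> (\<Sum>j\<in>(UNIV::'m set). r powr q)"
      unfolding block_powsum_def using q
      by (intro sum_mono powr_mono2 block) (auto intro: blocknorm_nonneg simp: blocknorm_ereal)
    also have "\<dots> = c" using c q by (simp add: r_def powr_powr)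
    finally show ?thesis
      using \<epsilon> by (simp add: feasible_mats_def psd_mat_def transpose_scalar scaleR_matrix_vector_assoc[symmetric])
  qed
  with \<epsilon> that show ?thesis by blast
qed

lemma det_maximizer_exists:
  fixes S :: "'m::finite \<Rightarrow> 'k::finite set" and A :: "real^'n^'k"
  assumes P: "\<And>j. 1 \<le> P j" and q: "0 < q" and c: "0 < c"
    and cover: "(\<Union>j. S j) = UNIV" and rank: "rank A = CARD('n)"
  obtains V where "V \<in> feasible_mats (\<lambda>j. ereal (P j)) S q A c" "0 < det V"
    "\<And>V'. V' \<in> feasible_mats (\<lambda>j. ereal (P j)) S q A c \<Longrightarrow> det V' \<le> det V"
proof -
  let ?K = "feasible_mats (\<lambda>j. ereal (P j)) S q A c"
  have P_pos: "0 < P j" for j using P[of j] by simp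
  obtain C where "\<And>V. V \<in> ?K \<Longrightarrow> norm V \<le> C"
    using bounded_feasible_mats[OF cover q rank] P_pos by (metis zero_ereal_def ereal_less(2))
  then have "compact ?K"
    using closed_feasible_mats[OF P_pos q] by (auto simp: compact_eq_bounded_closed bounded_iff)
  moreover obtain \<epsilon> where \<epsilon>: "0 < \<epsilon>" "\<epsilon> *\<^sub>R mat 1 \<in> ?K"
    using scaled_identity_feasible[OF c q, of S A] P by blast
  moreover have "continuous_on ?K det"
    unfolding det_def[abs_def] by (intro continuous_intros)
  ultimately obtain V where V: "V \<in> ?K" "\<And>V'. V' \<in> ?K \<Longrightarrow> det V' \<le> det V"
    using continuous_attains_sup[of ?K det] by blast
  moreover have "0 < det V"
    using V(2)[OF \<epsilon>(2)] \<epsilon>(1) by (simp add: det_scaleR) (meson less_le_trans zero_less_power)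
  ultimately show ?thesis using that by blast
qed

lemma det_maximizer_saturates:
  fixes S :: "'m::finite \<Rightarrow> 'k::finite set" and A :: "real^'n^'k"
  assumes p: "\<And>j. 0 < p j" and S: "\<And>j. S j \<noteq> {}" and q: "0 < q"
    and V: "V \<in> feasible_mats p S q A c" "0 < det V"
    and max: "\<And>V'. V' \<in> feasible_mats p S q A c \<Longrightarrow> det V' \<le> det V"
  shows "block_powsum p S q (row_norms A V) = c"
proof (rule ccontr)
  define G where "G = block_powsum p S q (row_norms A V)"
  assume "block_powsum p S q (row_norms A V) \<noteq> c"
  then have G: "G < c" using V(1) by (simp add: feasible_mats_def G_def)
  have G0: "0 \<le> G" by (simp add: G_def block_powsum_def sum_nonneg)
  obtain s where s: "1 < s" "s powr q * G \<le> c"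
  proof (cases "G = 0")
    case True then show ?thesis using that[of 2] G by simp
  next
    case False
    with G0 have "0 < G" by simp
    then show ?thesis
      using that[of "(c / G) powr (1/q)"] G q by (simp add: powr_powr)
  qed
  have "block_powsum p S q (row_norms A (s *\<^sub>R V)) \<le> s powr q * G"
  proof -
    have "blocknorm (p j) (S j) (row_norms A (s *\<^sub>R V)) \<le> s * blocknorm (p j) (S j) (row_norms A V)" for j
      using s p S by (intro blocknorm_le_mult)
        (auto simp: row_norms_def scaleR_matrix_vector_assoc[symmetric])
    then show ?thesis
      unfolding G_def block_powsum_def using s q S
      by (simp add: sum_distrib_left blocknorm_nonneg flip: powr_mult)
        (intro sum_mono powr_mono2, auto intro: blocknorm_nonneg)
  qed
  then have "s *\<^sub>R V \<in> feasible_mats p S q A c"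
    using V(1) s by (auto simp: feasible_mats_def psd_mat_def transpose_scalar
        scaleR_matrix_vector_assoc[symmetric])
  then have "det (s *\<^sub>R V) \<le> det V" by (rule max)
  moreover have "det V < det (s *\<^sub>R V)"
    using s V(2) by (simp add: det_scaleR one_less_power)
  ultimately show False by simp
qed

lemma det_maximizer_pos_def_mat:
  assumes "V \<in> feasible_mats p S q A c" "0 < det V"
  shows "pos_def_mat V"
  using assms by (intro psd_mat_invertible_imp_pos_def) (auto simp: feasible_mats_def invertible_det_nz)

lemma det_maximizer_inverse_square:
  fixes S :: "'m::finite \<Rightarrow> 'k::finite set" and A :: "real^'n^'k"
  assumes P: "\<And>j. 0 < P j" and q: "0 < q" and c: "0 < c"
    and cover: "(\<Union>j. S j) = UNIV" and disj: "disjoint_family S"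
    and V: "V \<in> feasible_mats (\<lambda>j. ereal (P j)) S q A c" "0 < det V"
    and max: "\<And>V'. V' \<in> feasible_mats (\<lambda>j. ereal (P j)) S q A c \<Longrightarrow> det V' \<le> det V"
    and saturated: "block_powsum (\<lambda>j. ereal (P j)) S q (row_norms A V) = c"
  shows "matrix_inv V ** matrix_inv V
           = weighted_gram A (\<lambda>i. real CARD('n) / c * lagrange_weights P S q A V i)"
proof -
  let ?G = "\<lambda>V. block_powsum (\<lambda>j. ereal (P j)) S q (row_norms A V)"
  let ?B = "weighted_gram A (\<lambda>i. q * lagrange_weights P S q A V i)"
  have sym: "transpose V = V" using V(1) by (simp add: feasible_mats_def)
  have pd: "pos_def_mat V" by (rule det_maximizer_pos_def_mat[OF V])
  have trace: "trace (?B ** V ** V) = q * c"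
    using trace_lagrange_gram_euler[OF sym pd P cover disj] saturated by simp
  have "matrix_inv V ** matrix_inv V = (real CARD('n) / trace (?B ** V ** V)) *\<^sub>R ?B"
  proof (rule det_max_inverse_square[OF sym pd V(2) transpose_weighted_gram])
    show "0 < trace (?B ** V ** V)" using trace q c by simp
    show "((\<lambda>t. ?G (V + t *\<^sub>R H)) has_real_derivative trace (?B ** V ** H)) (at 0)" for H
      by (rule DERIV_block_powsum_row_norms[OF sym pd P cover disj])
    show "det V' \<le> det V" if "transpose V' = V'" "psd_mat V'" "?G V' \<le> ?G V" for V'
      using that saturated by (intro max) (simp add: feasible_mats_def)
  qed
  also have "\<dots> = weighted_gram A (\<lambda>i. real CARD('n) / c * lagrange_weights P S q A V i)"
    using q by (simp add: trace weighted_gram_scaleR)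
  finally show ?thesis .
qed

lemma norm_matrix_inv_square_le:
  fixes S :: "'m::finite \<Rightarrow> 'k::finite set" and A :: "real^'n^'k"
  assumes P: "\<And>j. 2 \<le> P j" and cover: "(\<Union>j. S j) = UNIV" and disj: "disjoint_family S"
    and sym: "transpose V = V" and pd: "pos_def_mat V" and \<kappa>: "0 \<le> \<kappa>"
    and inv_square: "matrix_inv V ** matrix_inv V = weighted_gram A (\<lambda>i. \<kappa> * lagrange_weights P S q A V i)"
  shows "(norm (matrix_inv V *v x))\<^sup>2
           \<le> \<kappa> * (\<Sum>j\<in>UNIV. block_pow (P j) (S j) A V powr ((q - 2) / P j)
                         * (blocknorm (ereal (P j)) (S j) (A *v x))\<^sup>2)"
proof -
  have inv: "invertible V" by (rule pos_def_mat_invertible[OF pd])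
  have "(norm (matrix_inv V *v x))\<^sup>2 = x \<bullet> ((matrix_inv V ** matrix_inv V) *v x)"
    by (simp add: power2_norm_eq_inner inner_symmetric_matrix[OF transpose_matrix_inv[OF sym inv]]
        matrix_vector_mul_assoc inner_commute)
  also have "\<dots> = (\<Sum>i\<in>UNIV. \<kappa> * lagrange_weights P S q A V i * ((A *v x) $ i)\<^sup>2)"
    unfolding inv_square inner_weighted_gram by (simp add: matrix_vector_mult_def inner_vec_def)
  also have "\<dots> = \<kappa> * (\<Sum>j\<in>UNIV. \<Sum>i\<in>S j. block_weight q (P j) (S j) A V i * ((A *v x) $ i)\<^sup>2)"
    unfolding sum_over_blocks[OF cover disj] lagrange_weights_def sum_distrib_left
    by (simp only: mult.assoc)
  also have "\<dots> \<le> \<kappa> * (\<Sum>j\<in>UNIV. block_pow (P j) (S j) A V powr ((q - 2) / P j)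
                         * (blocknorm (ereal (P j)) (S j) (A *v x))\<^sup>2)"
    using \<kappa> P by (intro mult_left_mono sum_mono block_weight_holder) auto
  finally show ?thesis .
qed

lemma norm_matrix_inv_le_mixnorm:
  fixes S :: "'m::finite \<Rightarrow> 'k::finite set" and A :: "real^'n^'k"
  assumes P: "\<And>j. 2 \<le> P j" and q: "1 \<le> q" and S: "\<And>j. S j \<noteq> {}"
    and cover: "(\<Union>j. S j) = UNIV" and disj: "disjoint_family S"
    and sym: "transpose V = V" and pd: "pos_def_mat V"
    and c: "c = (if q \<le> 2 then real CARD('n) else real CARD('n) powr (q / 2))"
    and saturated: "block_powsum (\<lambda>j. ereal (P j)) S q (row_norms A V) = c"
    and inv_square: "matrix_inv V ** matrix_inv V
                       = weighted_gram A (\<lambda>i. real CARD('n) / c * lagrange_weights P S q A V i)"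
  shows "norm (matrix_inv V *v x) \<le> mixnorm (\<lambda>j. ereal (P j)) S q (A *v x)"
proof -
  define n where "n = real CARD('n)"
  define \<sigma> where "\<sigma> j = block_pow (P j) (S j) A V" for j
  define N where "N j = blocknorm (ereal (P j)) (S j) (A *v x)" for j
  have P_pos: "0 < P j" for j using P[of j] by simp
  have n: "0 < n" by (simp add: n_def)
  have N: "0 \<le> N j" for j using P_pos[of j] by (simp add: N_def blocknorm_ereal)
  have r_le: "(norm (matrix_inv V *v x))\<^sup>2 \<le> n / c * (\<Sum>j\<in>UNIV. \<sigma> j powr ((q - 2) / P j) * (N j)\<^sup>2)"
    unfolding \<sigma>_def N_def n_def using c
    by (intro norm_matrix_inv_square_le[OF P cover disj sym pd _ inv_square]) simp
  have mixnorm: "mixnorm (\<lambda>j. ereal (P j)) S q (A *v x) = (\<Sum>j\<in>UNIV. N j powr q) powr (1 / q)"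
    by (simp add: mixnorm_def N_def)
  show ?thesis
  proof (cases "q \<le> 2")
    case True
    have "N j \<le> \<sigma> j powr (1 / P j) * norm (matrix_inv V *v x)" for j
      using blocknorm_mult_le_row_norms[OF sym pos_def_mat_invertible[OF pd] _ S,
          where p = "ereal (P j)" and A = A and x = x] P_pos[of j]
      by (simp add: N_def \<sigma>_def blocknorm_row_norms)
    then show ?thesis
      using True c r_le unfolding mixnorm
      by (intro powsum_root_bound_small_exponent[OF _ q _ P_pos _ N]) (auto simp: n_def \<sigma>_def block_pow_nonneg)
  next
    case False
    have "(\<Sum>j\<in>UNIV. \<sigma> j powr (q / P j)) = n powr (q / 2)"
      using saturated False c P_pos by (simp add: \<sigma>_def n_def block_powsum_row_norms less_imp_neq[symmetric])
    then show ?thesis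
      using False c r_le unfolding mixnorm
      by (intro powsum_root_bound_large_exponent[OF _ _ P_pos n _ N]) (auto simp: n_def \<sigma>_def block_pow_nonneg)
  qed
qed

theorem finite_exponents_det_maximizer:
  fixes S :: "'m::finite \<Rightarrow> 'k::finite set" and A :: "real^'n^'k"
  assumes P: "\<And>j. 2 \<le> P j" and q: "1 \<le> q" and S: "\<And>j. S j \<noteq> {}"
    and cover: "(\<Union>j. S j) = UNIV" and disj: "disjoint_family S" and rank: "rank A = CARD('n)"
    and c: "c = (if q \<le> 2 then real CARD('n) else real CARD('n) powr (q / 2))"
  obtains V where "V \<in> feasible_mats (\<lambda>j. ereal (P j)) S q A c"
    "\<And>V'. V' \<in> feasible_mats (\<lambda>j. ereal (P j)) S q A c \<Longrightarrow> det V' \<le> det V"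
    "pos_def_mat V" "block_powsum (\<lambda>j. ereal (P j)) S q (row_norms A V) = c"
    "matrix_inv V ** matrix_inv V \<in> gram_cone A"
    "\<And>x. norm (matrix_inv V *v x) \<le> mixnorm (\<lambda>j. ereal (P j)) S q (A *v x)"
proof -
  have P_pos: "0 < P j" for j using P[of j] by simp
  have q_pos: "0 < q" using q by simp
  have c_pos: "0 < c" using c by simp
  obtain V where V: "V \<in> feasible_mats (\<lambda>j. ereal (P j)) S q A c" "0 < det V"
    and max: "\<And>V'. V' \<in> feasible_mats (\<lambda>j. ereal (P j)) S q A c \<Longrightarrow> det V' \<le> det V"
    using P by (metis det_maximizer_exists[OF _ q_pos c_pos cover rank] one_le_numeral order_trans)
  have sym: "transpose V = V" using V(1) by (simp add: feasible_mats_def)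
  have pd: "pos_def_mat V" by (rule det_maximizer_pos_def_mat[OF V])
  have saturated: "block_powsum (\<lambda>j. ereal (P j)) S q (row_norms A V) = c"
    using det_maximizer_saturates[OF _ S q_pos V max] P_pos by simp
  have inv_square: "matrix_inv V ** matrix_inv V
      = weighted_gram A (\<lambda>i. real CARD('n) / c * lagrange_weights P S q A V i)"
    by (rule det_maximizer_inverse_square[OF P_pos q_pos c_pos cover disj V max saturated])
  moreover have "0 \<le> real CARD('n) / c * lagrange_weights P S q A V i" for i
    using c_pos by (simp add: lagrange_weights_def block_weight_nonneg)
  ultimately have "matrix_inv V ** matrix_inv V \<in> gram_cone A"
    by (auto simp: gram_cone_def)
  with that V max pd saturated show ?thesis
    using norm_matrix_inv_le_mixnorm[OF P q S cover disj sym pd c saturated inv_square] by blast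
qed

section \<open>Infinite exponents\<close>

definition finite_approx :: "('m \<Rightarrow> ereal) \<Rightarrow> nat \<Rightarrow> 'm \<Rightarrow> real" where
  "finite_approx p k j = (if p j = \<infinity> then real k + 2 else real_of_ereal (p j))"

lemma finite_approx_ge_2: "2 \<le> p j \<Longrightarrow> 2 \<le> finite_approx p k j"
  by (cases "p j") (auto simp: finite_approx_def)

lemma tendsto_blocknorm_finite_approx:
  fixes f :: "nat \<Rightarrow> real^'k"
  assumes p: "2 \<le> p j" and S: "S \<noteq> {}" and f: "f \<longlonglongrightarrow> u" and \<rho>: "strict_mono \<rho>"
  shows "(\<lambda>k. blocknorm (ereal (finite_approx p (\<rho> k) j)) S (f k)) \<longlonglongrightarrow> blocknorm (p j) S u"
proof (cases "p j")
  case (real P)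
  then have "0 < P" using p by simp
  then have "isCont (blocknorm (ereal P) S) u"
    using continuous_on_blocknorm_ereal[of P UNIV S] by (simp add: continuous_on_eq_continuous_at)
  then show ?thesis using real isCont_tendsto_compose[OF _ f] by (simp add: finite_approx_def)
next
  case PInf
  have "filterlim (\<lambda>k. real (\<rho> k) + 2) at_top sequentially"
  proof (rule filterlim_at_top_mono[OF filterlim_real_sequentially])
    show "eventually (\<lambda>k. real k \<le> real (\<rho> k) + 2) sequentially"
      using seq_suble[OF \<rho>] by (intro always_eventually allI) (simp add: add_increasing2)
  qed
  then show ?thesis
    using tendsto_blocknorm_infinity[OF _ S f] PInf by (simp add: finite_approx_def)
qed (use p in simp)

lemma tendsto_block_powsum_finite_approx:
  fixes f :: "nat \<Rightarrow> real^'k::finite" and p :: "'m::finite \<Rightarrow> ereal"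
  assumes p: "\<And>j. 2 \<le> p j" and S: "\<And>j. S j \<noteq> {}" and f: "f \<longlonglongrightarrow> u"
    and \<rho>: "strict_mono \<rho>" and q: "0 < q"
  shows "(\<lambda>k. block_powsum (\<lambda>j. ereal (finite_approx p (\<rho> k) j)) S q (f k)) \<longlonglongrightarrow> block_powsum p S q u"
proof -
  have "(\<lambda>k. blocknorm (ereal (finite_approx p (\<rho> k) j)) (S j) (f k)) \<longlonglongrightarrow> blocknorm (p j) (S j) u" for j
    by (rule tendsto_blocknorm_finite_approx[where p = p and j = j, OF p S f \<rho>])
  then show ?thesis
    unfolding block_powsum_def using q
    by (intro tendsto_sum tendsto_powr') (auto intro!: always_eventually blocknorm_nonneg S)
qed

lemma limit_of_det_maximizers:
  fixes p :: "'m::finite \<Rightarrow> ereal" and S :: "'m \<Rightarrow> 'k::finite set" and A :: "real^'n^'k"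
    and Vs :: "nat \<Rightarrow> real^'n^'n"
  assumes p: "\<And>j. 2 \<le> p j" and q: "0 < q" and S: "\<And>j. S j \<noteq> {}"
    and sym: "\<And>k. transpose (Vs k) = Vs k" and pd: "\<And>k. pos_def_mat (Vs k)"
    and bounded: "\<And>k. norm (Vs k) \<le> C" and det: "\<And>k. d \<le> det (Vs k)" and d: "0 < d"
    and saturated: "\<And>k. block_powsum (\<lambda>j. ereal (finite_approx p k j)) S q (row_norms A (Vs k)) = c"
    and cone: "\<And>k. matrix_inv (Vs k) ** matrix_inv (Vs k) \<in> gram_cone A"
    and bound: "\<And>k x. norm (matrix_inv (Vs k) *v x) \<le> mixnorm (\<lambda>j. ereal (finite_approx p k j)) S q (A *v x)"
  obtains V where "transpose V = V" "pos_def_mat V" "block_powsum p S q (row_norms A V) = c"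
    "matrix_inv V ** matrix_inv V \<in> gram_cone A"
    "\<And>x. norm (matrix_inv V *v x) \<le> mixnorm p S q (A *v x)"
proof -
  have "bounded (range Vs)" using bounded by (auto simp: bounded_iff)
  then obtain \<rho> V where \<rho>: "strict_mono \<rho>" and "(Vs \<circ> \<rho>) \<longlonglongrightarrow> V"
    using bounded_imp_convergent_subsequence by blast
  then have lim: "(\<lambda>k. Vs (\<rho> k)) \<longlonglongrightarrow> V" by (simp add: o_def)
  have V_sym: "transpose V = V"
    using closed_sequentially[OF closed_symmetric_mats _ lim] sym by auto
  have "psd_mat V"
    using closed_sequentially[OF closed_psd_mats _ lim] pd pos_def_mat_imp_psd_mat by auto
  moreover have "d \<le> det V" using det by (intro LIMSEQ_le_const[OF tendsto_det[OF lim]]) auto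
  ultimately have V_pd: "pos_def_mat V"
    using d by (intro psd_mat_invertible_imp_pos_def[OF V_sym]) (auto simp: invertible_det_nz)
  have lim_inv: "(\<lambda>k. matrix_inv (Vs (\<rho> k))) \<longlonglongrightarrow> matrix_inv V"
    using \<open>d \<le> det V\<close> d by (intro tendsto_matrix_inv[OF lim]) simp
  from closed_sequentially[OF closed_gram_cone cone tendsto_matrix_mult[OF lim_inv lim_inv]]
  have "matrix_inv V ** matrix_inv V \<in> gram_cone A" .
  moreover have "block_powsum p S q (row_norms A V) = c"
  proof -
    have "isCont (row_norms A) V"
      using continuous_on_row_norms[of UNIV A] by (simp add: continuous_on_eq_continuous_at)
    then have "(\<lambda>k. row_norms A (Vs (\<rho> k))) \<longlonglongrightarrow> row_norms A V"
      by (rule isCont_tendsto_compose[OF _ lim])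
    from tendsto_block_powsum_finite_approx[where p = p and S = S, OF p S this \<rho> q]
    have "(\<lambda>k. c) \<longlonglongrightarrow> block_powsum p S q (row_norms A V)" by (simp add: saturated)
    then show ?thesis by (simp add: LIMSEQ_const_iff)
  qed
  moreover have "norm (matrix_inv V *v x) \<le> mixnorm p S q (A *v x)" for x
  proof (rule LIMSEQ_le)
    show "(\<lambda>k. norm (matrix_inv (Vs (\<rho> k)) *v x)) \<longlonglongrightarrow> norm (matrix_inv V *v x)"
      unfolding matrix_vector_mult_def using lim_inv by (intro tendsto_intros)
    show "(\<lambda>k. mixnorm (\<lambda>j. ereal (finite_approx p (\<rho> k) j)) S q (A *v x)) \<longlonglongrightarrow> mixnorm p S q (A *v x)"
      unfolding mixnorm_eq_block_powsum using q
      by (intro tendsto_powr' tendsto_block_powsum_finite_approx[where p = p and S = S, OF p S _ \<rho> q])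
        (auto simp: block_powsum_def sum_nonneg)
  qed (use bound in blast)
  ultimately show ?thesis using that V_sym V_pd by blast
qed

theorem exists_extremal_matrix:
  fixes p :: "'m::finite \<Rightarrow> ereal" and S :: "'m \<Rightarrow> 'k::finite set" and A :: "real^'n^'k"
  assumes p: "\<And>j. 2 \<le> p j" and q: "1 \<le> q" and S: "\<And>j. S j \<noteq> {}"
    and cover: "(\<Union>j. S j) = UNIV" and disj: "disjoint_family S" and rank: "rank A = CARD('n)"
    and c: "c = (if q \<le> 2 then real CARD('n) else real CARD('n) powr (q / 2))"
  obtains V where "transpose V = V" "pos_def_mat V" "block_powsum p S q (row_norms A V) = c"
    "matrix_inv V ** matrix_inv V \<in> gram_cone A"
    "\<And>x. norm (matrix_inv V *v x) \<le> mixnorm p S q (A *v x)"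
proof -
  let ?K = "\<lambda>k. feasible_mats (\<lambda>j. ereal (finite_approx p k j)) S q A c"
  have P: "2 \<le> finite_approx p k j" for k j by (rule finite_approx_ge_2) (rule p)
  have q_pos: "0 < q" and c_pos: "0 < c" using q c by auto
  have P_pos: "0 < finite_approx p k j" for k j using P[of k j] by simp
  define good where "good k V \<longleftrightarrow> V \<in> ?K k \<and> (\<forall>V'\<in>?K k. det V' \<le> det V) \<and> pos_def_mat V
      \<and> block_powsum (\<lambda>j. ereal (finite_approx p k j)) S q (row_norms A V) = c
      \<and> matrix_inv V ** matrix_inv V \<in> gram_cone A
      \<and> (\<forall>x. norm (matrix_inv V *v x) \<le> mixnorm (\<lambda>j. ereal (finite_approx p k j)) S q (A *v x))" for k V
  have "\<exists>V. good k V" for k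
    unfolding good_def
    by (rule finite_exponents_det_maximizer[where P = "finite_approx p k", OF P q S cover disj rank c]) blast
  then obtain Vs where "good k (Vs k)" for k by metis
  then have Vs_K: "Vs k \<in> ?K k" and Vs_max: "\<And>V'. V' \<in> ?K k \<Longrightarrow> det V' \<le> det (Vs k)"
    and Vs_props: "pos_def_mat (Vs k)"
      "block_powsum (\<lambda>j. ereal (finite_approx p k j)) S q (row_norms A (Vs k)) = c"
      "matrix_inv (Vs k) ** matrix_inv (Vs k) \<in> gram_cone A"
      "\<And>x. norm (matrix_inv (Vs k) *v x) \<le> mixnorm (\<lambda>j. ereal (finite_approx p k j)) S q (A *v x)"
    for k by (auto simp: good_def)
  obtain C where C: "\<And>p V. (\<And>j. 0 < p j) \<Longrightarrow> V \<in> feasible_mats p S q A c \<Longrightarrow> norm V \<le> C"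
    using bounded_feasible_mats[OF cover q_pos rank] by blast
  obtain \<epsilon> where \<epsilon>: "0 < \<epsilon>" "\<And>P. (\<And>j. 1 \<le> P j) \<Longrightarrow> \<epsilon> *\<^sub>R mat 1 \<in> feasible_mats (\<lambda>j. ereal (P j)) S q A c"
    using scaled_identity_feasible[OF c_pos q_pos] by blast
  have det: "\<epsilon> ^ CARD('n) \<le> det (Vs k)" for k
  proof -
    have "\<epsilon> *\<^sub>R mat 1 \<in> ?K k" using P[of k] by (intro \<epsilon>(2)) (meson one_le_numeral order_trans)
    from Vs_max[OF this] show ?thesis by (simp add: det_scaleR)
  qed
  have bounded: "norm (Vs k) \<le> C" for k using P_pos by (intro C[OF _ Vs_K]) simp
  have sym: "transpose (Vs k) = Vs k" for k using Vs_K by (simp add: feasible_mats_def)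
  have "0 < \<epsilon> ^ CARD('n)" using \<epsilon>(1) by simp
  from limit_of_det_maximizers[where p = p and S = S and Vs = Vs,
      OF p q_pos S sym Vs_props(1) bounded det this Vs_props(2-4)] that
  show ?thesis by blast
qed

lemma is_inv_sqrt_if_inverse_square:
  fixes V :: "real^'n^'n"
  assumes sym: "transpose V = V" and pd: "pos_def_mat V" and M: "matrix_inv V ** matrix_inv V = M"
  shows "is_inv_sqrt V M"
proof -
  have inv: "invertible V" by (rule pos_def_mat_invertible[OF pd])
  have "V ** V ** M = mat 1"
    by (simp add: M[symmetric] matrix_mul_assoc[symmetric] matrix_inv_right[OF inv])
       (simp add: matrix_mul_assoc matrix_inv_right[OF inv])
  moreover have "M ** (V ** V) = mat 1"
    by (simp add: M[symmetric] matrix_mul_assoc[symmetric] matrix_inv_left[OF inv])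
       (simp add: matrix_mul_assoc matrix_inv_left[OF inv])
  ultimately show ?thesis
    using sym pd by (auto simp: is_inv_sqrt_def invertible_def)
qed

theorem lemma4p2:
  fixes p :: "'m::finite \<Rightarrow> ereal" and S :: "'m \<Rightarrow> 'k::finite set"
    and q :: real and A :: "real^'n^'k"
  assumes p_ge: "\<And>j. 2 \<le> p j"
    and q_ge: "1 \<le> q"
    and S_nonempty: "\<And>j. S j \<noteq> {}"
    and S_disj: "\<And>j j'. j \<noteq> j' \<Longrightarrow> S j \<inter> S j' = {}"
    and S_cover: "(\<Union>j. S j) = UNIV"
    and rankA: "rank A = CARD('n)"
  shows "\<exists>(W::real^'k^'k) (U::real^'n^'n).
           (\<forall>i i'. i \<noteq> i' \<longrightarrow> W $ i $ i' = 0) \<and> (\<forall>i. 0 \<le> W $ i $ i) \<and>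
           is_inv_sqrt U (transpose A ** W ** A) \<and>
           (\<Sum>j\<in>UNIV. alpha (p j) (S j) A U powr q) =
              (if q \<le> 2 then real CARD('n) else real CARD('n) powr (q / 2)) \<and>
           (\<forall>x j. blocknorm (p j) (S j) (A *v x) \<le> alpha (p j) (S j) A U * norm (matrix_inv U *v x)
                \<and> alpha (p j) (S j) A U * norm (matrix_inv U *v x)
                    \<le> alpha (p j) (S j) A U * mixnorm p S q (A *v x))"
proof -
  have disj: "disjoint_family S" using S_disj by (auto simp: disjoint_family_on_def)
  obtain U where sym: "transpose U = U" and pd: "pos_def_mat U"
    and saturated: "block_powsum p S q (row_norms A U) =
                      (if q \<le> 2 then real CARD('n) else real CARD('n) powr (q / 2))"
    and cone: "matrix_inv U ** matrix_inv U \<in> gram_cone A"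
    and bound: "\<And>x. norm (matrix_inv U *v x) \<le> mixnorm p S q (A *v x)"
    by (rule exists_extremal_matrix[where p = p and S = S,
          OF p_ge q_ge S_nonempty S_cover disj rankA refl]) blast
  from cone obtain w where w: "\<And>i. 0 \<le> w i" "matrix_inv U ** matrix_inv U = weighted_gram A w"
    by (auto simp: gram_cone_def)
  have p_pos: "0 < p j" for j
    using p_ge[of j] by (metis less_le_trans zero_less_numeral zero_ereal_def ereal_less(2) numeral_eq_ereal)
  have "blocknorm (p j) (S j) (A *v x) \<le> alpha (p j) (S j) A U * norm (matrix_inv U *v x)" for j x
    unfolding alpha_eq_blocknorm_row_norms
    by (rule blocknorm_mult_le_row_norms[OF sym pos_def_mat_invertible[OF pd] p_pos S_nonempty])
  moreover have "alpha (p j) (S j) A U * norm (matrix_inv U *v x)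
      \<le> alpha (p j) (S j) A U * mixnorm p S q (A *v x)" for j x
    unfolding alpha_eq_blocknorm_row_norms using S_nonempty by (intro mult_left_mono bound blocknorm_nonneg) auto
  moreover have "is_inv_sqrt U (transpose A ** diag_mat w ** A)"
    using is_inv_sqrt_if_inverse_square[OF sym pd w(2)] by (simp add: weighted_gram_def)
  ultimately show ?thesis
    using saturated w(1)
    by (intro exI[of _ "diag_mat w"] exI[of _ U])
      (auto simp: diag_mat_def alpha_eq_blocknorm_row_norms block_powsum_def)
qed

end
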